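(* Let $k$ be an algebraically closed field, $A$ a finite dimensional $k$-algebra and $f\colon P_1\to P_0$ a morphism in $\operatorname{proj}A$. Then $\mathcal{W}_f$ is a wide subcategory of $\operatorname{mod}A$ (closed under kernels, cokernels and extensions).
   Context: Let $\nu=D\operatorname{Hom}_A(-,A)$ be the Nakayama functor, $C_f=\operatorname{Cok}f$ and $K_{\nu f}=\operatorname{Ker}(\nu f\colon\nu P_1\to\nu P_0)$. Define $\overline{\mathcal{T}}_f=\{X\in\operatorname{mod}A\mid\operatorname{Hom}_A(X,K_{\nu f})=0\}$, $\overline{\mathcal{F}}_f=\{X\in\operatorname{mod}A\mid\operatorname{Hom}_A(C_f,X)=0\}$ and $\mathcal{W}_f=\overline{\mathcal{T}}_f\cap\overline{\mathcal{F}}_f$. *)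

theory Defs
  imports Main "HOL-Computational_Algebra.Polynomial"
begin

definition alg_closed :: "'k::field itself \<Rightarrow> bool" where
  "alg_closed _ \<longleftrightarrow> (\<forall>p::'k poly. degree p > 0 \<longrightarrow> (\<exists>x. poly p x = 0))"

definition fd_algebra :: "('k::field \<Rightarrow> 'a::ring_1) \<Rightarrow> bool" where
  "fd_algebra emb \<longleftrightarrow>
     (\<forall>x y. emb (x + y) = emb x + emb y) \<and>
     (\<forall>x y. emb (x * y) = emb x * emb y) \<and>
     emb 1 = 1 \<and>
     (\<forall>c a. emb c * a = a * emb c) \<and>
     (\<exists>B. finite B \<and> (\<forall>a. \<exists>c. a = (\<Sum>b\<in>B. emb (c b) * b)))"

record ('a, 'm) amod =
  mcar :: "'m set"
  madd :: "'m \<Rightarrow> 'm \<Rightarrow> 'm"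
  mzero :: "'m"
  mact :: "'a \<Rightarrow> 'm \<Rightarrow> 'm"

definition is_amod :: "('a::ring_1, 'm) amod \<Rightarrow> bool" where
  "is_amod M \<longleftrightarrow>
     mzero M \<in> mcar M \<and>
     (\<forall>x\<in>mcar M. \<forall>y\<in>mcar M. madd M x y \<in> mcar M) \<and>
     (\<forall>a. \<forall>x\<in>mcar M. mact M a x \<in> mcar M) \<and>
     (\<forall>x\<in>mcar M. \<forall>y\<in>mcar M. \<forall>z\<in>mcar M. madd M (madd M x y) z = madd M x (madd M y z)) \<and>
     (\<forall>x\<in>mcar M. \<forall>y\<in>mcar M. madd M x y = madd M y x) \<and>
     (\<forall>x\<in>mcar M. madd M (mzero M) x = x) \<and>
     (\<forall>x\<in>mcar M. \<exists>y\<in>mcar M. madd M x y = mzero M) \<and>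
     (\<forall>a. \<forall>x\<in>mcar M. \<forall>y\<in>mcar M. mact M a (madd M x y) = madd M (mact M a x) (mact M a y)) \<and>
     (\<forall>a b. \<forall>x\<in>mcar M. mact M (a + b) x = madd M (mact M a x) (mact M b x)) \<and>
     (\<forall>a b. \<forall>x\<in>mcar M. mact M (a * b) x = mact M a (mact M b x)) \<and>
     (\<forall>x\<in>mcar M. mact M 1 x = x)"

fun lincomb :: "('a, 'm) amod \<Rightarrow> ('a \<times> 'm) list \<Rightarrow> 'm" where
  "lincomb M [] = mzero M"
| "lincomb M ((a, g) # xs) = madd M (mact M a g) (lincomb M xs)"

definition in_modA :: "('a::ring_1, 'm) amod \<Rightarrow> bool" where
  "in_modA M \<longleftrightarrow> is_amod M \<and>
     (\<exists>gs. set gs \<subseteq> mcar M \<and> (\<forall>x\<in>mcar M. \<exists>cs. map snd cs = gs \<and> x = lincomb M cs))"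

definition ahom :: "('a::ring_1, 'm) amod \<Rightarrow> ('a, 'n) amod \<Rightarrow> ('m \<Rightarrow> 'n) \<Rightarrow> bool" where
  "ahom M N g \<longleftrightarrow>
     (\<forall>x\<in>mcar M. g x \<in> mcar N) \<and>
     (\<forall>x\<in>mcar M. \<forall>y\<in>mcar M. g (madd M x y) = madd N (g x) (g y)) \<and>
     (\<forall>a. \<forall>x\<in>mcar M. g (mact M a x) = mact N a (g x))"

definition free_mod :: "nat \<Rightarrow> ('a::ring_1, nat \<Rightarrow> 'a) amod" where
  "free_mod n = \<lparr> mcar = {v. \<forall>i\<ge>n. v i = 0}, madd = (\<lambda>v w i. v i + w i),
                  mzero = (\<lambda>i. 0), mact = (\<lambda>a v i. a * v i) \<rparr>"

definition reg_mod :: "('a::ring_1, 'a) amod" where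
  "reg_mod = \<lparr> mcar = UNIV, madd = (+), mzero = 0, mact = (*) \<rparr>"

definition in_projA :: "('a::ring_1, 'm) amod \<Rightarrow> bool" where
  "in_projA P \<longleftrightarrow> is_amod P \<and>
     (\<exists>n i r. ahom P (free_mod n) i \<and> ahom (free_mod n) P r \<and> (\<forall>x\<in>mcar P. r (i x) = x))"

definition homA :: "('a::ring_1, 'p) amod \<Rightarrow> ('p \<Rightarrow> 'a) set" where
  "homA P = {h. ahom P reg_mod h \<and> (\<forall>p. p \<notin> mcar P \<longrightarrow> h p = 0)}"

text \<open>\<nu>P = D Hom_A(P,A): k-linear functionals on the k-space Hom_A(P,A)
  (extensional), with left A-action (a\<phi>)(h) = \<phi>(h a).\<close>
definition nak :: "('k::field \<Rightarrow> 'a::ring_1) \<Rightarrow> ('a, 'p) amod \<Rightarrow> ('a, ('p \<Rightarrow> 'a) \<Rightarrow> 'k) amod" where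
  "nak emb P = \<lparr>
     mcar = {\<phi>. (\<forall>h\<in>homA P. \<forall>h'\<in>homA P. \<phi> (\<lambda>p. h p + h' p) = \<phi> h + \<phi> h') \<and>
                (\<forall>c. \<forall>h\<in>homA P. \<phi> (\<lambda>p. h p * emb c) = c * \<phi> h) \<and>
                (\<forall>h. h \<notin> homA P \<longrightarrow> \<phi> h = 0)},
     madd = (\<lambda>\<phi> \<psi> h. \<phi> h + \<psi> h),
     mzero = (\<lambda>h. 0),
     mact = (\<lambda>a \<phi> h. if h \<in> homA P then \<phi> (\<lambda>p. h p * a) else 0) \<rparr>"

text \<open>\<nu>f : \<nu>P1 \<rightarrow> \<nu>P0 for f : P1 \<rightarrow> P0, i.e. D Hom_A(f, A).\<close>
definition nak_map :: "('a::ring_1, 'p1) amod \<Rightarrow> ('a, 'p0) amod \<Rightarrow> ('p1 \<Rightarrow> 'p0)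
    \<Rightarrow> (('p1 \<Rightarrow> 'a) \<Rightarrow> 'k::field) \<Rightarrow> (('p0 \<Rightarrow> 'a) \<Rightarrow> 'k)" where
  "nak_map P1 P0 f \<phi> = (\<lambda>h. if h \<in> homA P0 then \<phi> (\<lambda>p. if p \<in> mcar P1 then h (f p) else 0) else 0)"

definition K_nak :: "('k::field \<Rightarrow> 'a::ring_1) \<Rightarrow> ('a, 'p1) amod \<Rightarrow> ('a, 'p0) amod \<Rightarrow> ('p1 \<Rightarrow> 'p0)
    \<Rightarrow> ('a, ('p1 \<Rightarrow> 'a) \<Rightarrow> 'k) amod" where
  "K_nak emb P1 P0 f =
     (nak emb P1)\<lparr> mcar := {\<phi> \<in> mcar (nak emb P1). nak_map P1 P0 f \<phi> = (\<lambda>h. 0)} \<rparr>"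

definition ker_mod :: "('a, 'm) amod \<Rightarrow> ('a, 'n) amod \<Rightarrow> ('m \<Rightarrow> 'n) \<Rightarrow> ('a, 'm) amod" where
  "ker_mod M N g = M\<lparr> mcar := {x \<in> mcar M. g x = mzero N} \<rparr>"

text \<open>C_f = Cok f, realised as the quotient of P0 by the image of f (cosets).\<close>
definition coker_mod :: "('a, 'p1) amod \<Rightarrow> ('a, 'p0) amod \<Rightarrow> ('p1 \<Rightarrow> 'p0) \<Rightarrow> ('a, 'p0 set) amod" where
  "coker_mod P1 P0 f =
     (let I = f ` mcar P1;
          cos = (\<lambda>x. {madd P0 x y | y. y \<in> I}) in
      \<lparr> mcar = {cos x | x. x \<in> mcar P0},
        madd = (\<lambda>S T. {madd P0 s t | s t. s \<in> S \<and> t \<in> T}),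
        mzero = cos (mzero P0),
        mact = (\<lambda>a S. {madd P0 (mact P0 a s) i | s i. s \<in> S \<and> i \<in> I}) \<rparr>)"

definition Tbar :: "('k::field \<Rightarrow> 'a::ring_1) \<Rightarrow> ('a, 'p1) amod \<Rightarrow> ('a, 'p0) amod \<Rightarrow> ('p1 \<Rightarrow> 'p0)
    \<Rightarrow> ('a, 'x) amod \<Rightarrow> bool" where
  "Tbar emb P1 P0 f X \<longleftrightarrow> in_modA X \<and>
     (\<forall>g. ahom X (K_nak emb P1 P0 f) g \<longrightarrow> (\<forall>x\<in>mcar X. g x = mzero (K_nak emb P1 P0 f)))"

definition Fbar :: "('a::ring_1, 'p1) amod \<Rightarrow> ('a, 'p0) amod \<Rightarrow> ('p1 \<Rightarrow> 'p0)
    \<Rightarrow> ('a, 'x) amod \<Rightarrow> bool" where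
  "Fbar P1 P0 f X \<longleftrightarrow> in_modA X \<and>
     (\<forall>g. ahom (coker_mod P1 P0 f) X g \<longrightarrow> (\<forall>c\<in>mcar (coker_mod P1 P0 f). g c = mzero X))"

definition Wf :: "('k::field \<Rightarrow> 'a::ring_1) \<Rightarrow> ('a, 'p1) amod \<Rightarrow> ('a, 'p0) amod \<Rightarrow> ('p1 \<Rightarrow> 'p0)
    \<Rightarrow> ('a, 'x) amod \<Rightarrow> bool" where
  "Wf emb P1 P0 f X \<longleftrightarrow> Tbar emb P1 P0 f X \<and> Fbar P1 P0 f X"

end

(* X lies in W_f iff Hom_A(f, X) : Hom_A(P0, X) -> Hom_A(P1, X), v |-> v o f, is bijective.
   Injectivity means Hom_A(C_f, X) = 0, as Hom_A(C_f, X) is the kernel of Hom_A(f, X).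
   Surjectivity means Hom_A(X, K_{nu f}) = 0: by Hom_A(X, nu P) = D Hom_A(P, X), computed with a
   dual basis of P, morphisms X -> K_{nu f} correspond to k-linear functionals on Hom_A(P1, X)
   vanishing on the image of Hom_A(f, X), and a vector outside a subspace is separated from it by
   such a functional. Since P0 and P1 are projective, Hom_A(P0, -) and Hom_A(P1, -) are exact, so
   bijectivity passes to kernels, cokernels and extensions by diagram chases; kernels stay finitely
   generated because A is finite dimensional. *)

theory Submission
  imports Defs
begin

section \<open>Modules and linear maps\<close>

lemma amod_zero_closed: "is_amod M \<Longrightarrow> mzero M \<in> mcar M"
  by (simp add: is_amod_def)

lemma amod_add_closed: "is_amod M \<Longrightarrow> x \<in> mcar M \<Longrightarrow> y \<in> mcar M \<Longrightarrow> madd M x y \<in> mcar M"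
  by (simp add: is_amod_def)

lemma amod_act_closed: "is_amod M \<Longrightarrow> x \<in> mcar M \<Longrightarrow> mact M a x \<in> mcar M"
  by (simp add: is_amod_def)

lemma amod_add_assoc:
  "is_amod M \<Longrightarrow> x \<in> mcar M \<Longrightarrow> y \<in> mcar M \<Longrightarrow> z \<in> mcar M \<Longrightarrow>
    madd M (madd M x y) z = madd M x (madd M y z)"
  unfolding is_amod_def by blast

lemma amod_add_commute: "is_amod M \<Longrightarrow> x \<in> mcar M \<Longrightarrow> y \<in> mcar M \<Longrightarrow> madd M x y = madd M y x"
  unfolding is_amod_def by blast

lemma amod_add_zero_left: "is_amod M \<Longrightarrow> x \<in> mcar M \<Longrightarrow> madd M (mzero M) x = x"
  unfolding is_amod_def by blast

lemma amod_add_inverse_ex: "is_amod M \<Longrightarrow> x \<in> mcar M \<Longrightarrow> \<exists>y\<in>mcar M. madd M x y = mzero M"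
  unfolding is_amod_def by blast

lemma amod_act_add:
  "is_amod M \<Longrightarrow> x \<in> mcar M \<Longrightarrow> y \<in> mcar M \<Longrightarrow> mact M a (madd M x y) = madd M (mact M a x) (mact M a y)"
  unfolding is_amod_def by blast

lemma amod_add_act: "is_amod M \<Longrightarrow> x \<in> mcar M \<Longrightarrow> mact M (a + b) x = madd M (mact M a x) (mact M b x)"
  unfolding is_amod_def by blast

lemma amod_act_mult: "is_amod M \<Longrightarrow> x \<in> mcar M \<Longrightarrow> mact M (a * b) x = mact M a (mact M b x)"
  unfolding is_amod_def by blast

lemma amod_act_one: "is_amod M \<Longrightarrow> x \<in> mcar M \<Longrightarrow> mact M 1 x = x"
  unfolding is_amod_def by blast

lemma amod_add_zero_right: "is_amod M \<Longrightarrow> x \<in> mcar M \<Longrightarrow> madd M x (mzero M) = x"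
  by (metis amod_add_commute amod_add_zero_left amod_zero_closed)

lemma amod_add_left_commute:
  "is_amod M \<Longrightarrow> x \<in> mcar M \<Longrightarrow> y \<in> mcar M \<Longrightarrow> z \<in> mcar M \<Longrightarrow>
    madd M x (madd M y z) = madd M y (madd M x z)"
  by (metis amod_add_assoc amod_add_commute)

lemma amod_add_swap_middle:
  "is_amod M \<Longrightarrow> a \<in> mcar M \<Longrightarrow> b \<in> mcar M \<Longrightarrow> c \<in> mcar M \<Longrightarrow> d \<in> mcar M \<Longrightarrow>
    madd M (madd M a b) (madd M c d) = madd M (madd M a c) (madd M b d)"
  by (metis amod_add_assoc amod_add_left_commute amod_add_closed)

lemma amod_add_right_cancel:
  assumes M: "is_amod M" and x: "x \<in> mcar M" and y: "y \<in> mcar M" and z: "z \<in> mcar M"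
    and eq: "madd M x z = madd M y z"
  shows "x = y"
proof -
  obtain w where w: "w \<in> mcar M" "madd M z w = mzero M" using amod_add_inverse_ex[OF M z] by blast
  have "x = madd M (madd M x z) w" using M x z w by (simp add: amod_add_assoc amod_add_zero_right)
  also have "\<dots> = madd M (madd M y z) w" using eq by simp
  also have "\<dots> = y" using M y z w by (simp add: amod_add_assoc amod_add_zero_right)
  finally show ?thesis .
qed

lemma amod_idem_eq_zero:
  assumes M: "is_amod M" and x: "x \<in> mcar M" and "madd M x x = x"
  shows "x = mzero M"
  using amod_add_right_cancel[OF M x amod_zero_closed[OF M] x] assms by (simp add: amod_add_zero_left)

lemma amod_zero_act:
  assumes M: "is_amod M" and x: "x \<in> mcar M"
  shows "mact M 0 x = mzero M"
  using amod_idem_eq_zero[OF M amod_act_closed[OF M x]] amod_add_act[OF M x, of 0 0] by simp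

lemma amod_act_zero:
  assumes M: "is_amod M"
  shows "mact M a (mzero M) = mzero M"
  using amod_idem_eq_zero[OF M amod_act_closed[OF M amod_zero_closed[OF M]]]
    amod_act_add[OF M amod_zero_closed[OF M] amod_zero_closed[OF M], of a]
    amod_add_zero_left[OF M amod_zero_closed[OF M]]
  by simp

lemma amod_add_neg: "is_amod M \<Longrightarrow> x \<in> mcar M \<Longrightarrow> madd M x (mact M (-1) x) = mzero M"
  using amod_add_act[of M x 1 "-1"] by (simp add: amod_act_one amod_zero_act)

lemma amod_eq_if_diff_zero:
  assumes M: "is_amod M" and x: "x \<in> mcar M" and y: "y \<in> mcar M"
    and "madd M y (mact M (-1) x) = mzero M"
  shows "y = x"
proof -
  have "y = madd M y (madd M (mact M (-1) x) x)"
    using amod_add_neg[OF M x] amod_add_commute[OF M x amod_act_closed[OF M x]] M y x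
    by (simp add: amod_add_zero_right amod_act_closed)
  also have "\<dots> = x"
    using assms by (simp add: amod_add_assoc[symmetric] amod_act_closed amod_add_zero_left)
  finally show ?thesis .
qed

lemma ahom_closed: "ahom M N g \<Longrightarrow> x \<in> mcar M \<Longrightarrow> g x \<in> mcar N"
  by (simp add: ahom_def)

lemma ahom_add: "ahom M N g \<Longrightarrow> x \<in> mcar M \<Longrightarrow> y \<in> mcar M \<Longrightarrow> g (madd M x y) = madd N (g x) (g y)"
  by (simp add: ahom_def)

lemma ahom_act: "ahom M N g \<Longrightarrow> x \<in> mcar M \<Longrightarrow> g (mact M a x) = mact N a (g x)"
  by (simp add: ahom_def)

lemma ahom_zero:
  assumes M: "is_amod M" and N: "is_amod N" and g: "ahom M N g"
  shows "g (mzero M) = mzero N"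
  using amod_zero_act[OF M amod_zero_closed[OF M]] ahom_act[OF g amod_zero_closed[OF M], of 0]
    amod_zero_act[OF N ahom_closed[OF g amod_zero_closed[OF M]]]
  by simp

lemma ahom_comp: "ahom M N g \<Longrightarrow> ahom N Q h \<Longrightarrow> ahom M Q (\<lambda>x. h (g x))"
  by (simp add: ahom_def)

lemma ahom_pointwise_add:
  assumes N: "is_amod N" and a: "ahom M N a" and b: "ahom M N b"
  shows "ahom M N (\<lambda>x. madd N (a x) (b x))"
  unfolding ahom_def
proof (intro conjI ballI allI)
  fix x assume x: "x \<in> mcar M"
  note ab = ahom_closed[OF a x] ahom_closed[OF b x]
  show "madd N (a x) (b x) \<in> mcar N" using amod_add_closed[OF N ab] .
  fix c show "madd N (a (mact M c x)) (b (mact M c x)) = mact N c (madd N (a x) (b x))"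
    using ahom_act[OF a x] ahom_act[OF b x] amod_act_add[OF N ab] by simp
next
  fix x y assume x: "x \<in> mcar M" and y: "y \<in> mcar M"
  show "madd N (a (madd M x y)) (b (madd M x y)) = madd N (madd N (a x) (b x)) (madd N (a y) (b y))"
    using ahom_add[OF a x y] ahom_add[OF b x y] ahom_closed[OF a] ahom_closed[OF b] x y
    by (simp add: amod_add_swap_middle[OF N])
qed

lemma ahom_pointwise_neg:
  assumes N: "is_amod N" and b: "ahom M N b"
  shows "ahom M N (\<lambda>x. mact N (-1) (b x))"
  unfolding ahom_def
proof (intro conjI ballI allI)
  fix x assume x: "x \<in> mcar M"
  show "mact N (-1) (b x) \<in> mcar N" using amod_act_closed[OF N ahom_closed[OF b x]] .
  fix c
  have "mact N (-1) (mact N c (b x)) = mact N c (mact N (-1) (b x))"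
    using amod_act_mult[OF N ahom_closed[OF b x], of "-1" c] amod_act_mult[OF N ahom_closed[OF b x], of c "-1"]
    by simp
  then show "mact N (-1) (b (mact M c x)) = mact N c (mact N (-1) (b x))"
    using ahom_act[OF b x] by simp
next
  fix x y assume "x \<in> mcar M" "y \<in> mcar M"
  then show "mact N (-1) (b (madd M x y)) = madd N (mact N (-1) (b x)) (mact N (-1) (b y))"
    using ahom_add[OF b] amod_act_add[OF N] ahom_closed[OF b] by simp
qed

lemma ahom_pointwise_diff:
  "is_amod N \<Longrightarrow> ahom M N a \<Longrightarrow> ahom M N b \<Longrightarrow> ahom M N (\<lambda>x. madd N (a x) (mact N (-1) (b x)))"
  using ahom_pointwise_add ahom_pointwise_neg by blast

lemma ahom_factor_through_inj:
  assumes X: "is_amod X" and i: "ahom X Y i" and inj: "inj_on i (mcar X)"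
    and P: "is_amod P" and v: "ahom P Y v" and v_im: "\<forall>x\<in>mcar P. v x \<in> i ` mcar X"
  shows "\<exists>v'. ahom P X v' \<and> (\<forall>x\<in>mcar P. i (v' x) = v x)"
proof -
  define v' where "v' x = inv_into (mcar X) i (v x)" for x
  have v'X: "v' x \<in> mcar X" and iv': "i (v' x) = v x" if "x \<in> mcar P" for x
    unfolding v'_def using v_im that inv_into_into f_inv_into_f by metis+
  have "ahom P X v'"
    unfolding ahom_def
  proof (intro conjI ballI allI)
    fix x assume x: "x \<in> mcar P"
    show "v' x \<in> mcar X" using v'X[OF x] .
    fix a
    have "i (v' (mact P a x)) = i (mact X a (v' x))"
      using iv' amod_act_closed[OF P x] x ahom_act[OF v x] ahom_act[OF i v'X[OF x]] by simp
    then show "v' (mact P a x) = mact X a (v' x)"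
      using inj v'X amod_act_closed[OF P x] amod_act_closed[OF X v'X[OF x]] by (simp add: inj_on_eq_iff)
  next
    fix x y assume x: "x \<in> mcar P" and y: "y \<in> mcar P"
    have "i (v' (madd P x y)) = i (madd X (v' x) (v' y))"
      using iv' amod_add_closed[OF P x y] x y ahom_add[OF v x y] ahom_add[OF i v'X[OF x] v'X[OF y]] by simp
    then show "v' (madd P x y) = madd X (v' x) (v' y)"
      using inj v'X amod_add_closed[OF P x y] amod_add_closed[OF X v'X[OF x] v'X[OF y]]
      by (simp add: inj_on_eq_iff)
  qed
  with iv' show ?thesis by blast
qed

lemma is_amod_restrict_carrier:
  assumes M: "is_amod M" and S: "S \<subseteq> mcar M" "mzero M \<in> S"
    "\<forall>x\<in>S. \<forall>y\<in>S. madd M x y \<in> S" "\<forall>a. \<forall>x\<in>S. mact M a x \<in> S"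
  shows "is_amod (M\<lparr>mcar := S\<rparr>)"
  unfolding is_amod_def
proof (simp, intro conjI ballI allI)
  show "mzero M \<in> S" using S by simp
  fix x assume x: "x \<in> S"
  then have xM: "x \<in> mcar M" using S by blast
  show "madd M (mzero M) x = x" using amod_add_zero_left[OF M xM] .
  show "mact M 1 x = x" using amod_act_one[OF M xM] .
  show "\<exists>y\<in>S. madd M x y = mzero M" using amod_add_neg[OF M xM] S x by blast
  fix a show "mact M a x \<in> S" using S x by blast
  fix b show "mact M (a + b) x = madd M (mact M a x) (mact M b x)" using amod_add_act[OF M xM] .
  show "mact M (a * b) x = mact M a (mact M b x)" using amod_act_mult[OF M xM] .
next
  fix x y assume "x \<in> S" "y \<in> S"
  then have x: "x \<in> mcar M" and y: "y \<in> mcar M" using S by auto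
  show "madd M x y \<in> S" using S \<open>x \<in> S\<close> \<open>y \<in> S\<close> by blast
  show "madd M x y = madd M y x" using amod_add_commute[OF M x y] .
  fix a show "mact M a (madd M x y) = madd M (mact M a x) (mact M a y)" using amod_act_add[OF M x y] .
next
  fix x y z assume "x \<in> S" "y \<in> S" "z \<in> S"
  then show "madd M (madd M x y) z = madd M x (madd M y z)" using amod_add_assoc[OF M] S by blast
qed

lemma ker_mod_carrier: "mcar (ker_mod X Y g) = {x \<in> mcar X. g x = mzero Y}"
  by (simp add: ker_mod_def)

lemma ahom_into_ker_mod_iff: "ahom P (ker_mod X Y g) v \<longleftrightarrow> ahom P X v \<and> (\<forall>x\<in>mcar P. g (v x) = mzero Y)"
  by (auto simp: ahom_def ker_mod_def)

lemma is_amod_ker_mod: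
  assumes X: "is_amod X" and Y: "is_amod Y" and g: "ahom X Y g"
  shows "is_amod (ker_mod X Y g)"
  unfolding ker_mod_def
  by (rule is_amod_restrict_carrier[OF X])
     (auto simp: ahom_zero[OF X Y g] amod_zero_closed amod_add_closed amod_act_closed
        ahom_add[OF g] ahom_act[OF g] amod_add_zero_left amod_act_zero X Y)

lemma lincomb_closed: "is_amod M \<Longrightarrow> snd ` set xs \<subseteq> mcar M \<Longrightarrow> lincomb M xs \<in> mcar M"
  by (induction xs) (auto simp: amod_zero_closed amod_add_closed amod_act_closed)

lemma lincomb_hom:
  assumes M: "is_amod M" and g: "ahom M N g" and g0: "g (mzero M) = mzero N"
  shows "snd ` set xs \<subseteq> mcar M \<Longrightarrow> g (lincomb M xs) = lincomb N (map (\<lambda>(a, x). (a, g x)) xs)"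
proof (induction xs)
  case Nil
  then show ?case using g0 by simp
next
  case (Cons p xs)
  then show ?case
    by (cases p) (auto simp: ahom_add[OF g] ahom_act[OF g] lincomb_closed[OF M] amod_act_closed[OF M])
qed

lemma lincomb_add_coeffs:
  assumes M: "is_amod M"
  shows "y ` set js \<subseteq> mcar M \<Longrightarrow> lincomb M (map (\<lambda>j. (a j + b j, y j)) js) =
    madd M (lincomb M (map (\<lambda>j. (a j, y j)) js)) (lincomb M (map (\<lambda>j. (b j, y j)) js))"
proof (induction js)
  case Nil
  then show ?case using M by (simp add: amod_add_zero_left amod_zero_closed)
next
  case (Cons j js)
  have "lincomb M (map (\<lambda>j. (c j, y j)) js) \<in> mcar M" for c
    using Cons.prems by (intro lincomb_closed[OF M]) auto
  with Cons show ?case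
    by (auto simp: amod_add_act[OF M] amod_add_swap_middle[OF M] amod_act_closed[OF M])
qed

lemma lincomb_scale_coeffs:
  assumes M: "is_amod M"
  shows "y ` set js \<subseteq> mcar M \<Longrightarrow>
    lincomb M (map (\<lambda>j. (c * a j, y j)) js) = mact M c (lincomb M (map (\<lambda>j. (a j, y j)) js))"
proof (induction js)
  case Nil
  then show ?case using M by (simp add: amod_act_zero)
next
  case (Cons j js)
  have "lincomb M (map (\<lambda>j. (a j, y j)) js) \<in> mcar M"
    using Cons.prems by (intro lincomb_closed[OF M]) auto
  with Cons show ?case
    by (auto simp: amod_act_add[OF M] amod_act_mult[OF M] amod_act_closed[OF M])
qed

lemma lincomb_restrict_carrier: "lincomb (M\<lparr>mcar := S\<rparr>) xs = lincomb M xs"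
  by (induction xs) auto

lemma lincomb_reg_mod: "lincomb reg_mod xs = (\<Sum>(a, x)\<leftarrow>xs. a * x)"
  by (induction xs) (auto simp: reg_mod_def)

lemma lincomb_free_mod: "lincomb (free_mod n) xs = (\<lambda>t. \<Sum>(a, v)\<leftarrow>xs. a * v t)"
  by (induction xs) (auto simp: free_mod_def)

lemma lincomb_one_coeffs:
  assumes M: "is_amod M"
  shows "y ` set js \<subseteq> mcar M \<Longrightarrow>
    lincomb M (map (\<lambda>j. (1, mact M (a j) (y j))) js) = lincomb M (map (\<lambda>j. (a j, y j)) js)"
  by (induction js) (auto simp: amod_act_one[OF M] amod_act_closed[OF M])

definition fun_mod :: "('a::ring_1, 'p) amod \<Rightarrow> ('a, 'x) amod \<Rightarrow> ('a, 'p \<Rightarrow> 'x) amod" where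
  "fun_mod P X = \<lparr> mcar = {w. (\<forall>p\<in>mcar P. w p \<in> mcar X) \<and> (\<forall>p. p \<notin> mcar P \<longrightarrow> w p = mzero X)},
     madd = (\<lambda>w w' p. madd X (w p) (w' p)), mzero = (\<lambda>p. mzero X), mact = (\<lambda>a w p. mact X a (w p)) \<rparr>"

lemma fun_mod_value_closed: "is_amod X \<Longrightarrow> w \<in> mcar (fun_mod P X) \<Longrightarrow> w p \<in> mcar X"
  by (cases "p \<in> mcar P") (auto simp: fun_mod_def amod_zero_closed)

lemma is_amod_fun_mod:
  assumes X: "is_amod X"
  shows "is_amod (fun_mod P X)"
  unfolding is_amod_def
proof (intro conjI ballI allI)
  let ?F = "fun_mod P X"
  note val = fun_mod_value_closed[OF X]
  show "mzero ?F \<in> mcar ?F" by (simp add: fun_mod_def amod_zero_closed[OF X])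
  fix w assume w: "w \<in> mcar ?F"
  note wX = val[OF w]
  show "madd ?F (mzero ?F) w = w" using wX by (simp add: fun_mod_def amod_add_zero_left[OF X])
  show "mact ?F 1 w = w" using wX by (simp add: fun_mod_def amod_act_one[OF X])
  show "\<exists>w'\<in>mcar ?F. madd ?F w w' = mzero ?F"
  proof
    show "(\<lambda>p. mact X (-1) (w p)) \<in> mcar ?F"
      using w wX by (auto simp: fun_mod_def amod_act_closed[OF X] amod_act_zero[OF X])
    show "madd ?F w (\<lambda>p. mact X (-1) (w p)) = mzero ?F"
      using wX by (simp add: fun_mod_def amod_add_neg[OF X])
  qed
  fix a
  show "mact ?F a w \<in> mcar ?F"
    using w wX by (auto simp: fun_mod_def amod_act_closed[OF X] amod_act_zero[OF X])
  fix b
  show "mact ?F (a + b) w = madd ?F (mact ?F a w) (mact ?F b w)"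
    "mact ?F (a * b) w = mact ?F a (mact ?F b w)"
    using wX by (simp_all add: fun_mod_def amod_add_act[OF X] amod_act_mult[OF X])
next
  let ?F = "fun_mod P X"
  note val = fun_mod_value_closed[OF X]
  fix w w' assume w: "w \<in> mcar ?F" and w': "w' \<in> mcar ?F"
  note wX = val[OF w] and w'X = val[OF w']
  show "madd ?F w w' \<in> mcar ?F"
    using w w' wX w'X by (auto simp: fun_mod_def amod_add_closed[OF X] amod_add_zero_left[OF X] amod_zero_closed[OF X])
  show "madd ?F w w' = madd ?F w' w"
    using wX w'X by (simp add: fun_mod_def amod_add_commute[OF X])
  fix a show "mact ?F a (madd ?F w w') = madd ?F (mact ?F a w) (mact ?F a w')"
    using wX w'X by (simp add: fun_mod_def amod_act_add[OF X])
  fix w'' assume "w'' \<in> mcar ?F"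
  note w''X = val[OF this]
  show "madd ?F (madd ?F w w') w'' = madd ?F w (madd ?F w' w'')"
    using wX w'X w''X by (simp add: fun_mod_def amod_add_assoc[OF X])
qed

lemma lincomb_fun_mod: "lincomb (fun_mod P X) cs p = lincomb X (map (\<lambda>(a, w). (a, w p)) cs)"
  by (induction cs) (auto simp: fun_mod_def)

section \<open>Free and projective modules\<close>

definition unit_vec :: "nat \<Rightarrow> nat \<Rightarrow> 'a::ring_1" where
  "unit_vec j = (\<lambda>t. if t = j then 1 else 0)"

lemma unit_vec_in_free_mod: "j < n \<Longrightarrow> unit_vec j \<in> mcar (free_mod n)"
  by (simp add: unit_vec_def free_mod_def)

lemma is_amod_free_mod: "is_amod (free_mod n :: ('a::ring_1, nat \<Rightarrow> 'a) amod)"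
  unfolding is_amod_def free_mod_def
  apply (auto simp: algebra_simps)
  subgoal for x by (rule exI[of _ "\<lambda>i. - x i"]) auto
  done

lemma is_amod_reg_mod: "is_amod reg_mod"
  unfolding is_amod_def reg_mod_def
  by (auto simp: algebra_simps intro: exI[of _ "- _"])

lemma free_mod_expand:
  assumes v: "v \<in> mcar (free_mod n)"
  shows "lincomb (free_mod n) (map (\<lambda>j. (v j, unit_vec j)) [0..<n]) = v"
proof
  fix t
  have "(\<Sum>j\<leftarrow>[0..<n]. v j * unit_vec j t) = (\<Sum>j\<in>{0..<n}. v j * unit_vec j t)"
    by (simp add: interv_sum_list_conv_sum_set_nat)
  also have "\<dots> = (if t < n then v t else 0)"
    by (simp add: unit_vec_def if_distrib[of "(*) _"] cong: if_cong)
  also have "\<dots> = v t" using v by (auto simp: free_mod_def)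
  finally show "lincomb (free_mod n) (map (\<lambda>j. (v j, unit_vec j)) [0..<n]) t = v t"
    by (simp add: lincomb_free_mod o_def)
qed

text \<open>A module in proj A comes with maps \<open>i: P \<rightarrow> A\<^sup>n\<close> and \<open>r: A\<^sup>n \<rightarrow> P\<close> with \<open>r \<circ> i = id\<close>; the
  elements \<open>r (unit_vec j)\<close> and the coordinates \<open>i x j\<close> form a dual basis of \<open>P\<close>.\<close>

definition retract_of_free ::
    "('a::ring_1, 'p) amod \<Rightarrow> nat \<Rightarrow> ('p \<Rightarrow> nat \<Rightarrow> 'a) \<Rightarrow> ((nat \<Rightarrow> 'a) \<Rightarrow> 'p) \<Rightarrow> bool" where
  "retract_of_free P n i r \<longleftrightarrow>
     is_amod P \<and> ahom P (free_mod n) i \<and> ahom (free_mod n) P r \<and> (\<forall>x\<in>mcar P. r (i x) = x)"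

lemma in_projA_is_amod: "in_projA P \<Longrightarrow> is_amod P"
  by (simp add: in_projA_def)

lemma in_projA_retract_of_free: "in_projA P \<Longrightarrow> \<exists>n i r. retract_of_free P n i r"
  by (auto simp: in_projA_def retract_of_free_def)

lemma retract_basis_closed: "retract_of_free P n i r \<Longrightarrow> j < n \<Longrightarrow> r (unit_vec j) \<in> mcar P"
  using ahom_closed unit_vec_in_free_mod by (fastforce simp: retract_of_free_def)

lemma retract_coord_add:
  "retract_of_free P n i r \<Longrightarrow> x \<in> mcar P \<Longrightarrow> y \<in> mcar P \<Longrightarrow> i (madd P x y) j = i x j + i y j"
  using ahom_add[of P "free_mod n" i x y] by (simp add: retract_of_free_def free_mod_def)

lemma retract_coord_act: "retract_of_free P n i r \<Longrightarrow> x \<in> mcar P \<Longrightarrow> i (mact P a x) j = a * i x j"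
  using ahom_act[of P "free_mod n" i x a] by (simp add: retract_of_free_def free_mod_def)

lemma retract_expand:
  assumes R: "retract_of_free P n i r" and x: "x \<in> mcar P"
  shows "x = lincomb P (map (\<lambda>j. (i x j, r (unit_vec j))) [0..<n])"
proof -
  have P: "is_amod P" and i: "ahom P (free_mod n) i" and r: "ahom (free_mod n) P r"
    using R by (auto simp: retract_of_free_def)
  have "x = r (i x)" using R x by (simp add: retract_of_free_def)
  also have "\<dots> = r (lincomb (free_mod n) (map (\<lambda>j. (i x j, unit_vec j)) [0..<n]))"
    using free_mod_expand[OF ahom_closed[OF i x]] by simp
  also have "\<dots> = lincomb P (map (\<lambda>j. (i x j, r (unit_vec j))) [0..<n])"
    by (subst lincomb_hom[where M = "free_mod n", OF is_amod_free_mod r ahom_zero[OF is_amod_free_mod P r]])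
       (auto simp: unit_vec_in_free_mod o_def)
  finally show ?thesis .
qed

lemma retract_hom_expand:
  assumes R: "retract_of_free P n i r" and g: "ahom P M g" and g0: "g (mzero P) = mzero M"
    and x: "x \<in> mcar P"
  shows "g x = lincomb M (map (\<lambda>j. (i x j, g (r (unit_vec j)))) [0..<n])"
proof -
  have P: "is_amod P" using R by (simp add: retract_of_free_def)
  have "g x = g (lincomb P (map (\<lambda>j. (i x j, r (unit_vec j))) [0..<n]))"
    using retract_expand[OF R x] by simp
  also have "\<dots> = lincomb M (map (\<lambda>j. (i x j, g (r (unit_vec j)))) [0..<n])"
    by (subst lincomb_hom[OF P g g0]) (auto simp: retract_basis_closed[OF R] o_def)
  finally show ?thesis .
qed

lemma ahom_from_retract_coeffs:
  assumes R: "retract_of_free P n i r" and Y: "is_amod Y" and y: "\<And>j. j < n \<Longrightarrow> y j \<in> mcar Y"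
  shows "ahom P Y (\<lambda>x. lincomb Y (map (\<lambda>j. (i x j, y j)) [0..<n]))"
proof -
  have ys: "y ` set [0..<n] \<subseteq> mcar Y" using y by auto
  show ?thesis
    unfolding ahom_def
  proof (intro conjI ballI allI)
    fix x assume x: "x \<in> mcar P"
    show "lincomb Y (map (\<lambda>j. (i x j, y j)) [0..<n]) \<in> mcar Y"
      by (rule lincomb_closed[OF Y]) (use y in auto)
    fix x' assume "x' \<in> mcar P"
    then show "lincomb Y (map (\<lambda>j. (i (madd P x x') j, y j)) [0..<n]) =
        madd Y (lincomb Y (map (\<lambda>j. (i x j, y j)) [0..<n])) (lincomb Y (map (\<lambda>j. (i x' j, y j)) [0..<n]))"
      using lincomb_add_coeffs[OF Y ys, of "\<lambda>j. i x j" "\<lambda>j. i x' j"] retract_coord_add[OF R x] by simp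
  next
    fix a x assume "x \<in> mcar P"
    then show "lincomb Y (map (\<lambda>j. (i (mact P a x) j, y j)) [0..<n]) =
        mact Y a (lincomb Y (map (\<lambda>j. (i x j, y j)) [0..<n]))"
      using lincomb_scale_coeffs[OF Y ys, of a "\<lambda>j. i x j"] retract_coord_act[OF R] by simp
  qed
qed

lemma projA_lift:
  assumes P: "in_projA P" and Y: "is_amod Y" and Z: "is_amod Z" and p: "ahom Y Z p"
    and w: "ahom P Z w" and w_im: "\<forall>x\<in>mcar P. w x \<in> p ` mcar Y"
  shows "\<exists>v. ahom P Y v \<and> (\<forall>x\<in>mcar P. p (v x) = w x)"
proof -
  obtain n i r where R: "retract_of_free P n i r" using in_projA_retract_of_free[OF P] by blast
  have P': "is_amod P" using P by (rule in_projA_is_amod)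
  define b where "b j = (SOME y. y \<in> mcar Y \<and> p y = w (r (unit_vec j)))" for j
  have b: "b j \<in> mcar Y \<and> p (b j) = w (r (unit_vec j))" if "j < n" for j
  proof -
    have "w (r (unit_vec j)) \<in> p ` mcar Y" using w_im retract_basis_closed[OF R that] by blast
    then have "\<exists>y. y \<in> mcar Y \<and> p y = w (r (unit_vec j))" by (metis imageE)
    then show ?thesis unfolding b_def by (rule someI_ex)
  qed
  define v where "v x = lincomb Y (map (\<lambda>j. (i x j, b j)) [0..<n])" for x
  have v: "ahom P Y v" unfolding v_def by (rule ahom_from_retract_coeffs[OF R Y]) (simp add: b)
  have "p (v x) = w x" if x: "x \<in> mcar P" for x
  proof -
    have "p (v x) = lincomb Z (map (\<lambda>(a, y). (a, p y)) (map (\<lambda>j. (i x j, b j)) [0..<n]))"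
      unfolding v_def by (rule lincomb_hom[OF Y p ahom_zero[OF Y Z p]]) (use b in auto)
    also have "\<dots> = lincomb Z (map (\<lambda>j. (i x j, w (r (unit_vec j)))) [0..<n])"
      by (simp add: o_def; rule arg_cong[where f = "lincomb Z"]; rule map_cong; simp add: b)
    also have "\<dots> = w x"
      using retract_hom_expand[OF R w ahom_zero[OF P' Z w] x] by simp
    finally show ?thesis .
  qed
  with v show ?thesis by blast
qed

section \<open>The cokernel of f and injectivity of Hom(f, X)\<close>

definition cok_class :: "('a, 'p1) amod \<Rightarrow> ('a, 'p0) amod \<Rightarrow> ('p1 \<Rightarrow> 'p0) \<Rightarrow> 'p0 \<Rightarrow> 'p0 set" where
  "cok_class P1 P0 f x = {madd P0 x (f p) | p. p \<in> mcar P1}"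

lemma coker_mod_carrier: "mcar (coker_mod P1 P0 f) = {cok_class P1 P0 f x | x. x \<in> mcar P0}"
  by (auto simp: coker_mod_def cok_class_def Let_def)

lemma coker_mod_add: "madd (coker_mod P1 P0 f) S T = {madd P0 s t | s t. s \<in> S \<and> t \<in> T}"
  by (simp add: coker_mod_def Let_def)

lemma coker_mod_act:
  "mact (coker_mod P1 P0 f) a S = {madd P0 (mact P0 a s) (f p) | s p. s \<in> S \<and> p \<in> mcar P1}"
  by (auto simp: coker_mod_def Let_def)

context
  fixes P1 :: "('a::ring_1, 'p1) amod" and P0 :: "('a, 'p0) amod" and f :: "'p1 \<Rightarrow> 'p0"
  assumes P1: "is_amod P1" and P0: "is_amod P0" and f: "ahom P1 P0 f"
begin

lemma cok_class_self: "x \<in> mcar P0 \<Longrightarrow> x \<in> cok_class P1 P0 f x"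
  unfolding cok_class_def using amod_zero_closed[OF P1] ahom_zero[OF P1 P0 f] amod_add_zero_right[OF P0] by force

lemma cok_class_add:
  assumes x: "x \<in> mcar P0" and y: "y \<in> mcar P0"
  shows "cok_class P1 P0 f (madd P0 x y) = madd (coker_mod P1 P0 f) (cok_class P1 P0 f x) (cok_class P1 P0 f y)"
proof (rule set_eqI, rule iffI)
  fix z assume "z \<in> cok_class P1 P0 f (madd P0 x y)"
  then obtain p where p: "p \<in> mcar P1" "z = madd P0 (madd P0 x y) (f p)" by (auto simp: cok_class_def)
  have fp: "f p \<in> mcar P0" using ahom_closed[OF f p(1)] .
  have "z = madd P0 (madd P0 x (f p)) (madd P0 y (f (mzero P1)))"
    using p fp x y P0 by (simp add: ahom_zero[OF P1 P0 f] amod_add_zero_right amod_add_assoc amod_add_commute[OF P0 y fp])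
  moreover have "madd P0 x (f p) \<in> cok_class P1 P0 f x" "madd P0 y (f (mzero P1)) \<in> cok_class P1 P0 f y"
    using p amod_zero_closed[OF P1] by (auto simp: cok_class_def)
  ultimately show "z \<in> madd (coker_mod P1 P0 f) (cok_class P1 P0 f x) (cok_class P1 P0 f y)"
    by (auto simp: coker_mod_add)
next
  fix z assume "z \<in> madd (coker_mod P1 P0 f) (cok_class P1 P0 f x) (cok_class P1 P0 f y)"
  then obtain p q where pq: "p \<in> mcar P1" "q \<in> mcar P1" "z = madd P0 (madd P0 x (f p)) (madd P0 y (f q))"
    by (auto simp: coker_mod_add cok_class_def)
  have "z = madd P0 (madd P0 x y) (f (madd P1 p q))"
    using pq x y P0 ahom_closed[OF f] by (simp add: ahom_add[OF f] amod_add_swap_middle)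
  then show "z \<in> cok_class P1 P0 f (madd P0 x y)"
    using pq amod_add_closed[OF P1] by (auto simp: cok_class_def)
qed

lemma cok_class_act:
  assumes x: "x \<in> mcar P0"
  shows "cok_class P1 P0 f (mact P0 a x) = mact (coker_mod P1 P0 f) a (cok_class P1 P0 f x)"
proof (rule set_eqI, rule iffI)
  fix z assume "z \<in> cok_class P1 P0 f (mact P0 a x)"
  then obtain p where p: "p \<in> mcar P1" "z = madd P0 (mact P0 a x) (f p)" by (auto simp: cok_class_def)
  have "z = madd P0 (mact P0 a (madd P0 x (f (mzero P1)))) (f p)"
    using p x P0 by (simp add: ahom_zero[OF P1 P0 f] amod_add_zero_right)
  moreover have "madd P0 x (f (mzero P1)) \<in> cok_class P1 P0 f x"
    using amod_zero_closed[OF P1] by (auto simp: cok_class_def)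
  ultimately show "z \<in> mact (coker_mod P1 P0 f) a (cok_class P1 P0 f x)"
    using p by (auto simp: coker_mod_act)
next
  fix z assume "z \<in> mact (coker_mod P1 P0 f) a (cok_class P1 P0 f x)"
  then obtain p q where pq: "p \<in> mcar P1" "q \<in> mcar P1"
      "z = madd P0 (mact P0 a (madd P0 x (f p))) (f q)"
    by (auto simp: coker_mod_act cok_class_def)
  have "z = madd P0 (mact P0 a x) (f (madd P1 (mact P1 a p) q))"
    using pq x P0 P1 ahom_closed[OF f]
    by (simp add: ahom_add[OF f] ahom_act[OF f] amod_act_add amod_add_assoc amod_act_closed)
  then show "z \<in> cok_class P1 P0 f (mact P0 a x)"
    using pq amod_add_closed[OF P1] amod_act_closed[OF P1] by (auto simp: cok_class_def)
qed

lemma cok_class_image: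
  assumes p: "p \<in> mcar P1"
  shows "cok_class P1 P0 f (f p) = cok_class P1 P0 f (mzero P0)"
proof (rule set_eqI, rule iffI)
  fix z assume "z \<in> cok_class P1 P0 f (f p)"
  then obtain q where q: "q \<in> mcar P1" "z = madd P0 (f p) (f q)" by (auto simp: cok_class_def)
  have "z = madd P0 (mzero P0) (f (madd P1 p q))"
    using p q P1 P0 ahom_closed[OF f] by (simp add: ahom_add[OF f] amod_add_zero_left amod_add_closed)
  then show "z \<in> cok_class P1 P0 f (mzero P0)"
    using p q amod_add_closed[OF P1] by (auto simp: cok_class_def)
next
  fix z assume "z \<in> cok_class P1 P0 f (mzero P0)"
  then obtain q where q: "q \<in> mcar P1" "z = madd P0 (mzero P0) (f q)" by (auto simp: cok_class_def)
  let ?r = "madd P1 (mact P1 (-1) p) q"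
  have r: "?r \<in> mcar P1" using p q P1 by (simp add: amod_add_closed amod_act_closed)
  have "z = madd P0 (f p) (f ?r)"
    using p q P1 P0 ahom_closed[OF f]
    by (simp add: ahom_add[OF f] ahom_act[OF f] amod_add_zero_left amod_act_closed
        amod_add_assoc[symmetric] amod_add_neg)
  then show "z \<in> cok_class P1 P0 f (f p)" using r by (auto simp: cok_class_def)
qed

end

definition precomp_inj :: "('a::ring_1, 'p1) amod \<Rightarrow> ('a, 'p0) amod \<Rightarrow> ('p1 \<Rightarrow> 'p0) \<Rightarrow> ('a, 'x) amod \<Rightarrow> bool" where
  "precomp_inj P1 P0 f X \<longleftrightarrow>
     (\<forall>v. ahom P0 X v \<and> (\<forall>p\<in>mcar P1. v (f p) = mzero X) \<longrightarrow> (\<forall>x\<in>mcar P0. v x = mzero X))"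

definition precomp_surj :: "('a::ring_1, 'p1) amod \<Rightarrow> ('a, 'p0) amod \<Rightarrow> ('p1 \<Rightarrow> 'p0) \<Rightarrow> ('a, 'x) amod \<Rightarrow> bool" where
  "precomp_surj P1 P0 f X \<longleftrightarrow>
     (\<forall>u. ahom P1 X u \<longrightarrow> (\<exists>v. ahom P0 X v \<and> (\<forall>p\<in>mcar P1. u p = v (f p))))"

lemma ahom_idem_to_zero:
  assumes N: "is_amod N" and g: "ahom M N g" and z: "z \<in> mcar M" and idem: "madd M z z = z"
  shows "g z = mzero N"
  using amod_idem_eq_zero[OF N ahom_closed[OF g z]] ahom_add[OF g z z] idem by simp

context
  fixes P1 :: "('a::ring_1, 'p1) amod" and P0 :: "('a, 'p0) amod" and f :: "'p1 \<Rightarrow> 'p0"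
    and X :: "('a, 'x) amod"
  assumes P1: "is_amod P1" and P0: "is_amod P0" and f: "ahom P1 P0 f" and X: "is_amod X"
begin

text \<open>\<open>Hom(C_f, X)\<close> is the kernel of \<open>Hom(f, X)\<close>: a map on the cokernel is read off on
  an arbitrary representative of each class.\<close>

lemma precomp_inj_if_Fbar:
  assumes F: "Fbar P1 P0 f X"
  shows "precomp_inj P1 P0 f X"
  unfolding precomp_inj_def
proof (intro allI impI ballI)
  fix v x assume "ahom P0 X v \<and> (\<forall>p\<in>mcar P1. v (f p) = mzero X)" and x: "x \<in> mcar P0"
  then have v: "ahom P0 X v" and vf: "\<And>p. p \<in> mcar P1 \<Longrightarrow> v (f p) = mzero X" by auto
  define g where "g S = v (SOME z. z \<in> S)" for S
  have v_class: "v z = v y" if "y \<in> mcar P0" "z \<in> cok_class P1 P0 f y" for y z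
    using that vf ahom_closed[OF v] ahom_closed[OF f] X
    by (auto simp: cok_class_def ahom_add[OF v] amod_add_zero_right)
  have g_class: "g (cok_class P1 P0 f y) = v y" if "y \<in> mcar P0" for y
    unfolding g_def
    by (rule someI2[where P = "\<lambda>z. z \<in> cok_class P1 P0 f y", OF cok_class_self[OF P1 P0 f that]])
       (use v_class that in auto)
  have "ahom (coker_mod P1 P0 f) X g"
    unfolding ahom_def coker_mod_carrier
    using g_class ahom_closed[OF v] ahom_add[OF v] ahom_act[OF v] amod_add_closed[OF P0]
      amod_act_closed[OF P0] cok_class_add[OF P1 P0 f, symmetric] cok_class_act[OF P1 P0 f, symmetric]
    by auto
  then have "g (cok_class P1 P0 f x) = mzero X"
    using F x by (auto simp: Fbar_def coker_mod_carrier)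
  then show "v x = mzero X" using g_class x by simp
qed

lemma Fbar_if_precomp_inj:
  assumes XM: "in_modA X" and I: "precomp_inj P1 P0 f X"
  shows "Fbar P1 P0 f X"
  unfolding Fbar_def
proof (intro conjI XM allI impI ballI)
  fix g S assume g: "ahom (coker_mod P1 P0 f) X g" and S: "S \<in> mcar (coker_mod P1 P0 f)"
  define v where "v x = g (cok_class P1 P0 f x)" for x
  have class_closed: "cok_class P1 P0 f x \<in> mcar (coker_mod P1 P0 f)" if "x \<in> mcar P0" for x
    using that by (auto simp: coker_mod_carrier)
  have v: "ahom P0 X v"
    unfolding ahom_def v_def
    using class_closed ahom_closed[OF g] ahom_add[OF g] ahom_act[OF g]
      cok_class_add[OF P1 P0 f] cok_class_act[OF P1 P0 f]
    by simp
  \<comment> \<open>\<open>coker_mod\<close> is not known to be a module, so \<open>ahom_zero\<close> does not apply\<close>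
  have "g (cok_class P1 P0 f (mzero P0)) = mzero X"
    using ahom_idem_to_zero[OF X g class_closed[OF amod_zero_closed[OF P0]]]
      cok_class_add[OF P1 P0 f amod_zero_closed[OF P0] amod_zero_closed[OF P0]]
      amod_add_zero_left[OF P0 amod_zero_closed[OF P0]]
    by simp
  then have "\<forall>p\<in>mcar P1. v (f p) = mzero X"
    using cok_class_image[OF P1 P0 f] by (simp add: v_def)
  then have "\<forall>x\<in>mcar P0. v x = mzero X" using I v by (simp add: precomp_inj_def)
  then show "g S = mzero X" using S by (auto simp: coker_mod_carrier v_def)
qed

end

section \<open>Linear algebra over the ground field\<close>

definition ksubspace :: "('k::field \<Rightarrow> 'a::ring_1) \<Rightarrow> ('a, 'm) amod \<Rightarrow> 'm set \<Rightarrow> bool" where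
  "ksubspace emb M L \<longleftrightarrow> L \<subseteq> mcar M \<and> mzero M \<in> L \<and> (\<forall>x\<in>L. \<forall>y\<in>L. madd M x y \<in> L) \<and>
     (\<forall>c. \<forall>x\<in>L. mact M (emb c) x \<in> L)"

definition klinear :: "('k::field \<Rightarrow> 'a::ring_1) \<Rightarrow> ('a, 'm) amod \<Rightarrow> ('m \<Rightarrow> 'k) \<Rightarrow> bool" where
  "klinear emb M lam \<longleftrightarrow>
     (\<forall>x\<in>mcar M. \<forall>y\<in>mcar M. lam (madd M x y) = lam x + lam y) \<and>
     (\<forall>c. \<forall>x\<in>mcar M. lam (mact M (emb c) x) = c * lam x)"

locale scalar_embedding =
  fixes emb :: "'k::field \<Rightarrow> 'a::ring_1"
  assumes emb_add: "emb (x + y) = emb x + emb y"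
    and emb_mult: "emb (x * y) = emb x * emb y"
    and emb_one: "emb 1 = 1"
begin

lemma emb_zero: "emb 0 = 0"
  using emb_add[of 0 0] by simp

lemma emb_minus_one: "emb (-1) = -1"
  using emb_add[of "-1" 1] by (simp add: emb_zero emb_one eq_neg_iff_add_eq_0)

lemma exists_maximal_ksubspace_avoiding:
  assumes W: "ksubspace emb M W" and u: "u \<notin> W"
  obtains H where "ksubspace emb M H" "W \<subseteq> H" "u \<notin> H"
    "\<And>H'. ksubspace emb M H' \<Longrightarrow> H \<subseteq> H' \<Longrightarrow> u \<notin> H' \<Longrightarrow> H' = H"
proof -
  define S where "S = {H. ksubspace emb M H \<and> W \<subseteq> H \<and> u \<notin> H}"
  have "\<exists>H\<in>S. \<forall>H'\<in>S. H \<subseteq> H' \<longrightarrow> H' = H"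
  proof (rule subset_Zorn_nonempty)
    show "S \<noteq> {}" using W u unfolding S_def by blast
  next
    fix C assume C: "C \<noteq> {}" "subset.chain S C"
    then have CS: "C \<subseteq> S" and ch: "\<And>A B. A \<in> C \<Longrightarrow> B \<in> C \<Longrightarrow> A \<subseteq> B \<or> B \<subseteq> A"
      by (auto simp: pred_on.chain_def)
    show "\<Union>C \<in> S"
      unfolding S_def ksubspace_def
    proof (intro CollectI conjI ballI allI)
      show "W \<subseteq> \<Union>C" "\<Union>C \<subseteq> mcar M" "u \<notin> \<Union>C"
        using C(1) CS unfolding S_def ksubspace_def by blast+
      show "mzero M \<in> \<Union>C" using C(1) CS unfolding S_def ksubspace_def by blast
      fix x y assume "x \<in> \<Union>C" "y \<in> \<Union>C"
      then obtain A B where AB: "A \<in> C" "B \<in> C" "x \<in> A" "y \<in> B" by auto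
      show "madd M x y \<in> \<Union>C"
        using ch[OF AB(1,2)] AB CS unfolding S_def ksubspace_def by blast
    next
      fix c x assume "x \<in> \<Union>C"
      then show "mact M (emb c) x \<in> \<Union>C" using CS unfolding S_def ksubspace_def by blast
    qed
  qed
  then obtain H where H: "H \<in> S" and max: "\<And>H'. H' \<in> S \<Longrightarrow> H \<subseteq> H' \<Longrightarrow> H' = H" by blast
  show ?thesis
  proof (rule that)
    show "ksubspace emb M H" "W \<subseteq> H" "u \<notin> H" using H by (auto simp: S_def)
    fix H' assume "ksubspace emb M H'" "H \<subseteq> H'" "u \<notin> H'"
    then show "H' = H" using max H unfolding S_def by blast
  qed
qed

context
  fixes M :: "('a, 'm) amod"
  assumes M: "is_amod M"
begin

lemma kscale_add: "x \<in> mcar M \<Longrightarrow> mact M (emb (c + d)) x = madd M (mact M (emb c) x) (mact M (emb d) x)"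
  by (simp add: emb_add amod_add_act[OF M])

lemma kscale_mult: "x \<in> mcar M \<Longrightarrow> mact M (emb (c * d)) x = mact M (emb c) (mact M (emb d) x)"
  by (simp add: emb_mult amod_act_mult[OF M])

lemma kscale_one: "x \<in> mcar M \<Longrightarrow> mact M (emb 1) x = x"
  by (simp add: emb_one amod_act_one[OF M])

lemma kscale_zero: "x \<in> mcar M \<Longrightarrow> mact M (emb 0) x = mzero M"
  by (simp add: emb_zero amod_zero_act[OF M])

lemma kscale_neg: "x \<in> mcar M \<Longrightarrow> madd M x (mact M (emb (-1)) x) = mzero M"
  by (simp add: emb_minus_one amod_add_neg[OF M])

lemma ksubspace_add_line:
  assumes H: "ksubspace emb M H" and v: "v \<in> mcar M"
  shows "ksubspace emb M {madd M w (mact M (emb a) v) | w a. w \<in> H}" (is "ksubspace emb M ?H'")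
  unfolding ksubspace_def
proof (intro conjI ballI allI)
  have HM: "H \<subseteq> mcar M" and zH: "mzero M \<in> H" using H by (auto simp: ksubspace_def)
  show "?H' \<subseteq> mcar M"
    using HM v by (auto simp: amod_add_closed[OF M] amod_act_closed[OF M])
  show "mzero M \<in> ?H'"
    using zH kscale_zero[OF v] amod_add_zero_left[OF M amod_zero_closed[OF M]]
    by (auto intro!: exI[of _ "mzero M"] exI[of _ 0])
next
  fix x y assume "x \<in> ?H'" "y \<in> ?H'"
  then obtain w1 a1 w2 a2 where w: "w1 \<in> H" "w2 \<in> H"
    and xy: "x = madd M w1 (mact M (emb a1) v)" "y = madd M w2 (mact M (emb a2) v)"
    by blast
  have "w1 \<in> mcar M" "w2 \<in> mcar M" using H w by (auto simp: ksubspace_def)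
  then have "madd M x y = madd M (madd M w1 w2) (mact M (emb (a1 + a2)) v)"
    using v unfolding xy by (simp add: kscale_add amod_add_swap_middle[OF M] amod_act_closed[OF M])
  moreover have "madd M w1 w2 \<in> H" using H w by (simp add: ksubspace_def)
  ultimately show "madd M x y \<in> ?H'" by blast
next
  fix c x assume "x \<in> ?H'"
  then obtain w a where w: "w \<in> H" "x = madd M w (mact M (emb a) v)" by blast
  have "w \<in> mcar M" using H w by (auto simp: ksubspace_def)
  then have "mact M (emb c) x = madd M (mact M (emb c) w) (mact M (emb (c * a)) v)"
    using w v by (simp add: amod_act_add[OF M] kscale_mult amod_act_closed[OF M])
  moreover have "mact M (emb c) w \<in> H" using H w by (simp add: ksubspace_def)
  ultimately show "mact M (emb c) x \<in> ?H'" by blast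
qed

text \<open>A maximal subspace \<open>H\<close> avoiding \<open>u\<close> is a complement of the line through \<open>u\<close>: otherwise
  \<open>H + k v\<close> would be a larger one.\<close>

lemma maximal_ksubspace_complement:
  assumes H: "ksubspace emb M H" and u: "u \<in> mcar M" "u \<notin> H"
    and max: "\<And>H'. ksubspace emb M H' \<Longrightarrow> H \<subseteq> H' \<Longrightarrow> u \<notin> H' \<Longrightarrow> H' = H"
    and v: "v \<in> mcar M"
  shows "\<exists>c. madd M v (mact M (emb (- c)) u) \<in> H"
proof (rule ccontr)
  assume nex: "\<not> ?thesis"
  have HM: "H \<subseteq> mcar M" and zH: "mzero M \<in> H" and scH: "\<And>c x. x \<in> H \<Longrightarrow> mact M (emb c) x \<in> H"
    using H by (auto simp: ksubspace_def)
  define H' where "H' = {madd M w (mact M (emb a) v) | w a. w \<in> H}"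
  have "H \<subseteq> H'"
  proof
    fix w assume "w \<in> H"
    then show "w \<in> H'"
      unfolding H'_def using kscale_zero[OF v] amod_add_zero_right[OF M] HM
      by (auto intro!: exI[of _ w] exI[of _ 0])
  qed
  moreover have "u \<notin> H'"
  proof
    assume "u \<in> H'"
    then obtain w a where w: "w \<in> H" "u = madd M w (mact M (emb a) v)" unfolding H'_def by blast
    have wM: "w \<in> mcar M" using w HM by blast
    show False
    proof (cases "a = 0")
      case True
      then show False using w u kscale_zero[OF v] amod_add_zero_right[OF M wM] by simp
    next
      case False
      have "mact M (emb (- (1/a))) (mact M (emb a) v) = mact M (emb (-1)) v"
        using kscale_mult[OF v, of "-(1/a)" a, symmetric] False by simp
      then have "madd M v (mact M (emb (- (1/a))) u) =
          madd M v (madd M (mact M (emb (- (1/a))) w) (mact M (emb (-1)) v))"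
        using w wM v by (simp add: amod_act_add[OF M] amod_act_closed[OF M])
      also have "\<dots> = mact M (emb (- (1/a))) w"
        using wM v kscale_neg amod_act_closed[OF M] amod_add_left_commute[OF M] amod_add_zero_right[OF M]
        by metis
      finally show False using nex scH[OF w(1)] by metis
    qed
  qed
  ultimately have "H' = H" using max ksubspace_add_line[OF H v] unfolding H'_def by blast
  moreover have "v \<in> H'"
    unfolding H'_def using zH amod_add_zero_left[OF M v] kscale_one[OF v]
    by (auto intro!: exI[of _ "mzero M"] exI[of _ 1])
  ultimately have "madd M v (mact M (emb (- 0)) u) \<in> H"
    using kscale_zero[OF u(1)] amod_add_zero_right[OF M v] by simp
  then show False using nex by blast
qed

lemma maximal_ksubspace_complement_unique:
  assumes H: "ksubspace emb M H" and u: "u \<in> mcar M" "u \<notin> H" and v: "v \<in> mcar M"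
    and c: "madd M v (mact M (emb (- c)) u) \<in> H" and d: "madd M v (mact M (emb (- d)) u) \<in> H"
  shows "c = d"
proof (rule ccontr)
  assume cd: "c \<noteq> d"
  have addH: "\<And>x y. x \<in> H \<Longrightarrow> y \<in> H \<Longrightarrow> madd M x y \<in> H"
    and scH: "\<And>c x. x \<in> H \<Longrightarrow> mact M (emb c) x \<in> H"
    using H by (auto simp: ksubspace_def)
  note closed = amod_act_closed[OF M] amod_add_closed[OF M]
  have "madd M (madd M v (mact M (emb (- d)) u)) (mact M (emb (-1)) (madd M v (mact M (emb (- c)) u))) =
      madd M (madd M v (mact M (emb (-1)) v)) (madd M (mact M (emb (- d)) u) (mact M (emb c) u))"
    using v u kscale_mult[OF u(1), of "-1" "- c", symmetric]
    by (simp add: amod_act_add[OF M] closed amod_add_assoc[OF M] amod_add_left_commute[OF M])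
  also have "\<dots> = mact M (emb (c - d)) u"
    using kscale_neg[OF v] kscale_add[OF u(1), of "- d" c] amod_add_zero_left[OF M] closed u by simp
  finally have "mact M (emb (c - d)) u \<in> H" using addH scH c d by metis
  then have "mact M (emb (1 / (c - d))) (mact M (emb (c - d)) u) \<in> H" using scH by blast
  then have "u \<in> H" using cd kscale_mult[OF u(1)] kscale_one[OF u(1)] by (metis divide_self_if
      right_minus_eq times_divide_eq_left mult_1)
  then show False using u by blast
qed

lemma exists_separating_functional:
  assumes W: "ksubspace emb M W" and u: "u \<in> mcar M" "u \<notin> W"
  obtains lam where "klinear emb M lam" "\<forall>w\<in>W. lam w = 0" "lam u = 1"
proof -
  obtain H where H: "ksubspace emb M H" "W \<subseteq> H" "u \<notin> H"
    and max: "\<And>H'. ksubspace emb M H' \<Longrightarrow> H \<subseteq> H' \<Longrightarrow> u \<notin> H' \<Longrightarrow> H' = H"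
    using exists_maximal_ksubspace_avoiding[OF W u(2)] by blast
  have HM: "H \<subseteq> mcar M" and addH: "\<And>x y. x \<in> H \<Longrightarrow> y \<in> H \<Longrightarrow> madd M x y \<in> H"
    and scH: "\<And>c x. x \<in> H \<Longrightarrow> mact M (emb c) x \<in> H"
    using H(1) by (auto simp: ksubspace_def)
  note closed = amod_act_closed[OF M] amod_add_closed[OF M]
  define lam where "lam v = (THE c. madd M v (mact M (emb (- c)) u) \<in> H)" for v
  have lamI: "madd M v (mact M (emb (- lam v)) u) \<in> H" if "v \<in> mcar M" for v
    unfolding lam_def
    by (rule theI') (use maximal_ksubspace_complement[OF H(1) u(1) H(3) max that]
        maximal_ksubspace_complement_unique[OF H(1) u(1) H(3) that] in blast)
  have lam_eq: "lam v = c" if "v \<in> mcar M" "madd M v (mact M (emb (- c)) u) \<in> H" for v c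
    using maximal_ksubspace_complement_unique[OF H(1) u(1) H(3) that(1) lamI[OF that(1)] that(2)] .
  show ?thesis
  proof
    show "klinear emb M lam"
      unfolding klinear_def
    proof (intro conjI ballI allI)
      fix x y assume x: "x \<in> mcar M" and y: "y \<in> mcar M"
      have "madd M (madd M x y) (mact M (emb (- (lam x + lam y))) u) =
          madd M (madd M x (mact M (emb (- lam x)) u)) (madd M y (mact M (emb (- lam y)) u))"
        using x y u kscale_add[OF u(1), of "- lam x" "- lam y"]
        by (simp add: closed amod_add_swap_middle[OF M])
      then have "madd M (madd M x y) (mact M (emb (- (lam x + lam y))) u) \<in> H"
        using addH lamI x y by simp
      then show "lam (madd M x y) = lam x + lam y"
        using lam_eq closed x y by blast
    next
      fix c x assume x: "x \<in> mcar M"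
      have "mact M (emb c) (madd M x (mact M (emb (- lam x)) u)) =
          madd M (mact M (emb c) x) (mact M (emb (- (c * lam x))) u)"
        using x u by (simp add: amod_act_add[OF M] kscale_mult[symmetric] closed)
      then have "madd M (mact M (emb c) x) (mact M (emb (- (c * lam x))) u) \<in> H"
        using scH lamI x by metis
      then show "lam (mact M (emb c) x) = c * lam x"
        using lam_eq closed x by blast
    qed
    show "\<forall>w\<in>W. lam w = 0"
      using H(2) HM lam_eq kscale_zero[OF u(1)] amod_add_zero_right[OF M] by (auto simp: subset_iff)
    show "lam u = 1"
      using lam_eq[OF u(1)] kscale_neg[OF u(1)] H(1) by (simp add: ksubspace_def)
  qed
qed

end

end

lemma klinear_zero:
  assumes M: "is_amod M" and lam: "klinear emb M lam"
  shows "lam (mzero M) = 0"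
proof -
  have "lam (mzero M) = lam (mzero M) + lam (mzero M)"
    using lam amod_zero_closed[OF M] amod_add_zero_left[OF M amod_zero_closed[OF M]]
    unfolding klinear_def by metis
  then show ?thesis by (metis add_cancel_left_right)
qed

lemma klinear_lincomb:
  assumes M: "is_amod M" and lam: "klinear emb M lam"
  shows "t ` set js \<subseteq> mcar M \<Longrightarrow>
    lam (lincomb M (map (\<lambda>j. (emb (c j), t j)) js)) = (\<Sum>j\<leftarrow>js. c j * lam (t j))"
proof (induction js)
  case Nil
  then show ?case using klinear_zero[OF M lam] by simp
next
  case (Cons j js)
  have "lincomb M (map (\<lambda>j. (emb (c j), t j)) js) \<in> mcar M"
    using Cons.prems by (intro lincomb_closed[OF M]) auto
  with Cons lam show ?case by (auto simp: klinear_def amod_act_closed[OF M])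
qed

locale central_scalar_embedding = scalar_embedding emb for emb :: "'k::field \<Rightarrow> 'a::ring_1" +
  assumes emb_central: "emb c * a = a * emb c"

lemma fd_algebra_central_scalar_embedding: "fd_algebra emb \<Longrightarrow> central_scalar_embedding emb"
  unfolding fd_algebra_def central_scalar_embedding_def central_scalar_embedding_axioms_def
    scalar_embedding_def
  by blast

section \<open>The Nakayama functor and surjectivity of Hom(f, X)\<close>

lemma homA_add: "h \<in> homA P \<Longrightarrow> p \<in> mcar P \<Longrightarrow> q \<in> mcar P \<Longrightarrow> h (madd P p q) = h p + h q"
  by (simp add: homA_def ahom_def reg_mod_def)

lemma homA_act: "h \<in> homA P \<Longrightarrow> p \<in> mcar P \<Longrightarrow> h (mact P a p) = a * h p"
  by (simp add: homA_def ahom_def reg_mod_def)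

lemma homA_out: "h \<in> homA P \<Longrightarrow> p \<notin> mcar P \<Longrightarrow> h p = 0"
  by (simp add: homA_def)

lemma homA_ahom: "h \<in> homA P \<Longrightarrow> ahom P reg_mod h"
  by (simp add: homA_def)

lemma homA_add_closed: "h \<in> homA P \<Longrightarrow> h' \<in> homA P \<Longrightarrow> (\<lambda>p. h p + h' p) \<in> homA P"
  by (simp add: homA_def ahom_def reg_mod_def algebra_simps)

lemma homA_mult_right: "h \<in> homA P \<Longrightarrow> (\<lambda>p. h p * a) \<in> homA P"
  by (simp add: homA_def ahom_def reg_mod_def algebra_simps)

lemma homA_zero: "(\<lambda>p. 0) \<in> homA P"
  by (simp add: homA_def ahom_def reg_mod_def)

lemma homA_sum: "finite J \<Longrightarrow> (\<And>j. j \<in> J \<Longrightarrow> H j \<in> homA P) \<Longrightarrow> (\<lambda>p. \<Sum>j\<in>J. H j p) \<in> homA P"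
  by (induction J rule: finite_induct) (auto simp: homA_zero homA_add_closed)

lemma homA_precomp:
  "is_amod P1 \<Longrightarrow> ahom P1 P0 f \<Longrightarrow> h \<in> homA P0 \<Longrightarrow> (\<lambda>p. if p \<in> mcar P1 then h (f p) else 0) \<in> homA P1"
  by (simp add: homA_def ahom_def reg_mod_def amod_add_closed amod_act_closed)

lemma ahom_homA_smul:
  assumes X: "is_amod X" and h: "h \<in> homA P" and y: "y \<in> mcar X"
  shows "ahom P X (\<lambda>p. mact X (h p) y)"
  unfolding ahom_def using amod_act_closed[OF X y] homA_add[OF h] homA_act[OF h]
  by (simp add: amod_add_act[OF X y] amod_act_mult[OF X y])

definition coord :: "('a::ring_1, 'p) amod \<Rightarrow> ('p \<Rightarrow> nat \<Rightarrow> 'a) \<Rightarrow> nat \<Rightarrow> 'p \<Rightarrow> 'a" where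
  "coord P i j = (\<lambda>p. if p \<in> mcar P then i p j else 0)"

lemma homA_coord: "retract_of_free P n i r \<Longrightarrow> coord P i j \<in> homA P"
  by (simp add: retract_of_free_def homA_def ahom_def reg_mod_def free_mod_def coord_def
      amod_add_closed amod_act_closed)

lemma retract_hom_to_free_expand:
  assumes R: "retract_of_free P n i r" and g: "ahom P (free_mod m) g" and p: "p \<in> mcar P"
  shows "g p l = (\<Sum>j<n. coord P i j p * g (r (unit_vec j)) l)"
proof -
  have "g (mzero P) = mzero (free_mod m)"
    using R ahom_zero[OF _ is_amod_free_mod g] by (simp add: retract_of_free_def)
  from retract_hom_expand[OF R g this p] p show ?thesis
    by (simp add: lincomb_free_mod o_def coord_def interv_sum_list_conv_sum_set_nat atLeast0LessThan)
qed

lemma homA_expand: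
  assumes R: "retract_of_free P n i r" and h: "h \<in> homA P"
  shows "h = (\<lambda>p. \<Sum>j<n. coord P i j p * h (r (unit_vec j)))"
proof
  fix p
  show "h p = (\<Sum>j<n. coord P i j p * h (r (unit_vec j)))"
  proof (cases "p \<in> mcar P")
    case True
    have "h (mzero P) = mzero reg_mod"
      using R ahom_zero[OF _ is_amod_reg_mod homA_ahom[OF h]] by (simp add: retract_of_free_def)
    from retract_hom_expand[OF R homA_ahom[OF h] this True] True show ?thesis
      by (simp add: lincomb_reg_mod o_def coord_def interv_sum_list_conv_sum_set_nat atLeast0LessThan)
  next
    case False
    then show ?thesis using homA_out[OF h] by (simp add: coord_def)
  qed
qed

lemma nak_add: "\<phi> \<in> mcar (nak emb P) \<Longrightarrow> h \<in> homA P \<Longrightarrow> h' \<in> homA P \<Longrightarrow> \<phi> (\<lambda>p. h p + h' p) = \<phi> h + \<phi> h'"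
  by (simp add: nak_def)

lemma nak_out: "\<phi> \<in> mcar (nak emb P) \<Longrightarrow> h \<notin> homA P \<Longrightarrow> \<phi> h = 0"
  by (simp add: nak_def)

lemma nak_zero:
  assumes "\<phi> \<in> mcar (nak emb P)"
  shows "\<phi> (\<lambda>p. 0) = 0"
proof -
  have "\<phi> (\<lambda>p. 0) = \<phi> (\<lambda>p. 0) + \<phi> (\<lambda>p. 0)" using nak_add[OF assms homA_zero homA_zero] by simp
  then show ?thesis by (metis add_cancel_left_right)
qed

lemma nak_sum:
  assumes \<phi>: "\<phi> \<in> mcar (nak emb P)"
  shows "finite J \<Longrightarrow> (\<And>j. j \<in> J \<Longrightarrow> H j \<in> homA P) \<Longrightarrow> \<phi> (\<lambda>p. \<Sum>j\<in>J. H j p) = (\<Sum>j\<in>J. \<phi> (H j))"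
proof (induction J rule: finite_induct)
  case empty
  then show ?case using nak_zero[OF \<phi>] by simp
next
  case (insert j J)
  then show ?case
    using nak_add[OF \<phi>, of "H j" "\<lambda>p. \<Sum>j\<in>J. H j p"] homA_sum[of J H P] by simp
qed

lemma lincomb_nak: "lincomb (nak emb P) xs h = (\<Sum>(a, \<phi>)\<leftarrow>xs. if h \<in> homA P then \<phi> (\<lambda>p. h p * a) else 0)"
  by (induction xs) (auto simp: nak_def)

lemma K_nak_carrier:
  "\<phi> \<in> mcar (K_nak emb P1 P0 f) \<longleftrightarrow> \<phi> \<in> mcar (nak emb P1) \<and> nak_map P1 P0 f \<phi> = (\<lambda>h. 0)"
  by (simp add: K_nak_def)

lemma K_nak_zero: "mzero (K_nak emb P1 P0 f) = (\<lambda>h. 0)"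
  by (simp add: K_nak_def nak_def)

lemma K_nak_add: "madd (K_nak emb P1 P0 f) \<phi> \<psi> = (\<lambda>h. \<phi> h + \<psi> h)"
  by (simp add: K_nak_def nak_def)

lemma K_nak_act: "mact (K_nak emb P1 P0 f) a \<phi> = (\<lambda>h. if h \<in> homA P1 then \<phi> (\<lambda>p. h p * a) else 0)"
  by (simp add: K_nak_def nak_def)

lemma K_nak_hom_zero:
  assumes X: "is_amod X" and \<psi>: "ahom X (K_nak emb P1 P0 f) \<psi>"
  shows "\<psi> (mzero X) = (\<lambda>h. 0)"
proof -
  have z: "mzero X \<in> mcar X" using amod_zero_closed[OF X] .
  have "\<psi> (mzero X) = mact (K_nak emb P1 P0 f) 0 (\<psi> (mzero X))"
    using amod_zero_act[OF X z] ahom_act[OF \<psi> z, of 0] by simp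
  also have "\<dots> = (\<lambda>h. 0)"
    using nak_zero ahom_closed[OF \<psi> z] by (auto simp: K_nak_carrier K_nak_act fun_eq_iff)
  finally show ?thesis .
qed

lemma K_nak_hom_lincomb:
  assumes X: "is_amod X" and \<psi>: "ahom X (K_nak emb P1 P0 f) \<psi>"
    and cs: "snd ` set cs \<subseteq> mcar X" and h: "h \<in> homA P1"
  shows "\<psi> (lincomb X cs) h = (\<Sum>(a, x)\<leftarrow>cs. \<psi> x (\<lambda>p. h p * a))"
proof -
  have "\<psi> (mzero X) = mzero (K_nak emb P1 P0 f)"
    using K_nak_hom_zero[OF X \<psi>] by (simp add: K_nak_zero)
  then have "\<psi> (lincomb X cs) = lincomb (K_nak emb P1 P0 f) (map (\<lambda>(a, x). (a, \<psi> x)) cs)"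
    by (rule lincomb_hom[OF X \<psi> _ cs])
  then show ?thesis
    using h by (simp add: K_nak_def lincomb_restrict_carrier lincomb_nak o_def split_def)
qed

text \<open>For \<open>\<psi> : X \<rightarrow> K_\<nu>f\<close>, the pairing of \<open>\<psi>\<close> with \<open>v \<circ> f\<close> through the dual basis of \<open>P1\<close> vanishes:
  expanding \<open>v\<close> in the dual basis of \<open>P0\<close> rewrites it as a sum of values of \<open>\<nu>f (\<psi> (v _))\<close>.\<close>

lemma K_nak_hom_pairing_precomp:
  assumes R1: "retract_of_free P1 n i r" and R0: "retract_of_free P0 m i' r'"
    and f: "ahom P1 P0 f" and X: "is_amod X"
    and \<psi>: "ahom X (K_nak emb P1 P0 f) \<psi>" and v: "ahom P0 X v"
  shows "(\<Sum>j<n. \<psi> (v (f (r (unit_vec j)))) (coord P1 i j)) = 0"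
proof -
  have P0: "is_amod P0" using R0 by (simp add: retract_of_free_def)
  define b where "b j = r (unit_vec j)" for j
  define b' where "b' l = r' (unit_vec l)" for l
  have b: "j < n \<Longrightarrow> b j \<in> mcar P1" for j unfolding b_def by (rule retract_basis_closed[OF R1])
  have vb': "l < m \<Longrightarrow> v (b' l) \<in> mcar X" for l
    unfolding b'_def using ahom_closed[OF v retract_basis_closed[OF R0]] by blast
  have \<psi>K: "\<psi> (v (b' l)) \<in> mcar (nak emb P1)" "nak_map P1 P0 f (\<psi> (v (b' l))) = (\<lambda>h. 0)" if "l < m" for l
    using ahom_closed[OF \<psi> vb'[OF that]] K_nak_carrier by blast+
  have coord_f: "(\<lambda>p. \<Sum>j<n. coord P1 i j p * i' (f (b j)) l) =
      (\<lambda>p. if p \<in> mcar P1 then coord P0 i' l (f p) else 0)" for l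
  proof -
    have "ahom P1 (free_mod m) (\<lambda>p. i' (f p))"
      using ahom_comp[OF f, of "free_mod m" i'] R0 by (simp add: retract_of_free_def)
    from retract_hom_to_free_expand[OF R1 this] show ?thesis
      using ahom_closed[OF f] by (auto simp: coord_def b_def fun_eq_iff)
  qed
  have "(\<Sum>j<n. \<psi> (v (f (b j))) (coord P1 i j)) =
      (\<Sum>j<n. \<Sum>l<m. \<psi> (v (b' l)) (\<lambda>p. coord P1 i j p * i' (f (b j)) l))"
  proof (rule sum.cong[OF refl])
    fix j assume "j \<in> {..<n}"
    then have fb: "f (b j) \<in> mcar P0" using b ahom_closed[OF f] by simp
    show "\<psi> (v (f (b j))) (coord P1 i j) = (\<Sum>l<m. \<psi> (v (b' l)) (\<lambda>p. coord P1 i j p * i' (f (b j)) l))"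
      using retract_hom_expand[OF R0 v ahom_zero[OF P0 X v] fb] K_nak_hom_lincomb[OF X \<psi> _ homA_coord[OF R1]] vb'
      by (simp add: b'_def o_def interv_sum_list_conv_sum_set_nat atLeast0LessThan image_subset_iff)
  qed
  also have "\<dots> = (\<Sum>l<m. \<Sum>j<n. \<psi> (v (b' l)) (\<lambda>p. coord P1 i j p * i' (f (b j)) l))"
    by (rule sum.swap)
  also have "\<dots> = (\<Sum>l<m. \<psi> (v (b' l)) (\<lambda>p. \<Sum>j<n. coord P1 i j p * i' (f (b j)) l))"
  proof (rule sum.cong[OF refl])
    fix l assume "l \<in> {..<m}"
    then have "\<psi> (v (b' l)) \<in> mcar (nak emb P1)" using \<psi>K(1) by simp
    then show "(\<Sum>j<n. \<psi> (v (b' l)) (\<lambda>p. coord P1 i j p * i' (f (b j)) l)) =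
        \<psi> (v (b' l)) (\<lambda>p. \<Sum>j<n. coord P1 i j p * i' (f (b j)) l)"
      by (rule nak_sum[symmetric]) (simp_all add: homA_mult_right homA_coord[OF R1])
  qed
  also have "\<dots> = (\<Sum>l<m. nak_map P1 P0 f (\<psi> (v (b' l))) (coord P0 i' l))"
    using homA_coord[OF R0] by (simp add: coord_f nak_map_def)
  also have "\<dots> = 0"
    using \<psi>K(2) by simp
  finally show ?thesis by (simp add: b_def)
qed

text \<open>Expanding \<open>h\<close> in the dual basis of \<open>P1\<close> and extending \<open>p \<mapsto> h p \<cdot> x\<close> along \<open>f\<close> turns \<open>\<psi> x h\<close>
  into such a pairing.\<close>

lemma K_nak_hom_trivial_if_precomp_surj:
  assumes R1: "retract_of_free P1 n i r" and R0: "retract_of_free P0 m i' r'"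
    and f: "ahom P1 P0 f" and X: "is_amod X" and S: "precomp_surj P1 P0 f X"
    and \<psi>: "ahom X (K_nak emb P1 P0 f) \<psi>" and x: "x \<in> mcar X"
  shows "\<psi> x = (\<lambda>h. 0)"
proof
  fix h
  have \<psi>x: "\<psi> x \<in> mcar (nak emb P1)" using ahom_closed[OF \<psi> x] K_nak_carrier by blast
  show "\<psi> x h = 0"
  proof (cases "h \<in> homA P1")
    case False
    then show ?thesis using nak_out \<psi>x by blast
  next
    case h: True
    define b where "b j = r (unit_vec j)" for j
    obtain v where v: "ahom P0 X v" and uv: "\<And>p. p \<in> mcar P1 \<Longrightarrow> mact X (h p) x = v (f p)"
      using S ahom_homA_smul[OF X h x] by (auto simp: precomp_surj_def)
    have "\<psi> x h = \<psi> x (\<lambda>p. \<Sum>j<n. coord P1 i j p * h (b j))"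
      by (rule arg_cong[where f = "\<psi> x", OF homA_expand[OF R1 h, folded b_def]])
    also have "\<dots> = (\<Sum>j<n. \<psi> x (\<lambda>p. coord P1 i j p * h (b j)))"
      by (rule nak_sum[OF \<psi>x]) (simp_all add: homA_mult_right homA_coord[OF R1])
    also have "\<dots> = (\<Sum>j<n. \<psi> (mact X (h (b j)) x) (coord P1 i j))"
      using ahom_act[OF \<psi> x] homA_coord[OF R1] by (simp add: K_nak_act)
    also have "\<dots> = (\<Sum>j<n. \<psi> (v (f (b j))) (coord P1 i j))"
      using uv retract_basis_closed[OF R1] by (simp add: b_def)
    also have "\<dots> = 0"
      unfolding b_def by (rule K_nak_hom_pairing_precomp[OF R1 R0 f X \<psi> v])
    finally show ?thesis .
  qed
qed

definition precomp_fun :: "('a, 'p1) amod \<Rightarrow> ('a, 'x) amod \<Rightarrow> ('p1 \<Rightarrow> 'p0) \<Rightarrow> ('p0 \<Rightarrow> 'x) \<Rightarrow> 'p1 \<Rightarrow> 'x" where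
  "precomp_fun P1 X f v = (\<lambda>p. if p \<in> mcar P1 then v (f p) else mzero X)"

definition hom_smul :: "('a, 'p) amod \<Rightarrow> ('a, 'x) amod \<Rightarrow> ('p \<Rightarrow> 'a) \<Rightarrow> 'x \<Rightarrow> 'p \<Rightarrow> 'x" where
  "hom_smul P X h y = (\<lambda>p. if p \<in> mcar P then mact X (h p) y else mzero X)"

context central_scalar_embedding
begin

context
  fixes P1 :: "('a, 'p1) amod" and P0 :: "('a, 'p0) amod" and f :: "'p1 \<Rightarrow> 'p0"
    and X :: "('a, 'x) amod"
  assumes P1: "is_amod P1" and P0: "is_amod P0" and f: "ahom P1 P0 f" and X: "is_amod X"
begin

lemma ksubspace_precomp_image: "ksubspace emb (fun_mod P1 X) {precomp_fun P1 X f v | v. ahom P0 X v}"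
  unfolding ksubspace_def
proof (intro conjI ballI allI)
  show "{precomp_fun P1 X f v | v. ahom P0 X v} \<subseteq> mcar (fun_mod P1 X)"
    using ahom_closed[OF f] ahom_closed by (fastforce simp: fun_mod_def precomp_fun_def)
  have "ahom P0 X (\<lambda>q. mzero X)"
    unfolding ahom_def using amod_zero_closed[OF X] amod_add_zero_left[OF X] amod_act_zero[OF X] by auto
  moreover have "mzero (fun_mod P1 X) = precomp_fun P1 X f (\<lambda>q. mzero X)"
    by (auto simp: fun_mod_def precomp_fun_def)
  ultimately show "mzero (fun_mod P1 X) \<in> {precomp_fun P1 X f v | v. ahom P0 X v}" by blast
next
  fix w w' assume "w \<in> {precomp_fun P1 X f v | v. ahom P0 X v}" "w' \<in> {precomp_fun P1 X f v | v. ahom P0 X v}"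
  then obtain v v' where v: "ahom P0 X v" "w = precomp_fun P1 X f v"
    and v': "ahom P0 X v'" "w' = precomp_fun P1 X f v'" by blast
  have "madd (fun_mod P1 X) w w' = precomp_fun P1 X f (\<lambda>q. madd X (v q) (v' q))"
    using amod_add_zero_left[OF X amod_zero_closed[OF X]] by (auto simp: v v' fun_mod_def precomp_fun_def)
  with ahom_pointwise_add[OF X v(1) v'(1)]
  show "madd (fun_mod P1 X) w w' \<in> {precomp_fun P1 X f v | v. ahom P0 X v}" by blast
next
  fix c w assume "w \<in> {precomp_fun P1 X f v | v. ahom P0 X v}"
  then obtain v where v: "ahom P0 X v" "w = precomp_fun P1 X f v" by blast
  have "ahom P0 X (\<lambda>q. mact X (emb c) (v q))"
    unfolding ahom_def
  proof (intro conjI ballI allI)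
    fix q assume q: "q \<in> mcar P0"
    note vq = ahom_closed[OF v(1) q]
    show "mact X (emb c) (v q) \<in> mcar X" using amod_act_closed[OF X vq] .
    fix a show "mact X (emb c) (v (mact P0 a q)) = mact X a (mact X (emb c) (v q))"
      using ahom_act[OF v(1) q] amod_act_mult[OF X vq, symmetric] emb_central by metis
  next
    fix q q' assume q: "q \<in> mcar P0" and q': "q' \<in> mcar P0"
    show "mact X (emb c) (v (madd P0 q q')) = madd X (mact X (emb c) (v q)) (mact X (emb c) (v q'))"
      using ahom_add[OF v(1) q q'] amod_act_add[OF X ahom_closed[OF v(1) q] ahom_closed[OF v(1) q']] by simp
  qed
  moreover have "mact (fun_mod P1 X) (emb c) w = precomp_fun P1 X f (\<lambda>q. mact X (emb c) (v q))"
    using amod_act_zero[OF X] by (auto simp: v fun_mod_def precomp_fun_def)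
  ultimately show "mact (fun_mod P1 X) (emb c) w \<in> {precomp_fun P1 X f v | v. ahom P0 X v}" by blast
qed

lemma hom_smul_in_fun_mod: "y \<in> mcar X \<Longrightarrow> hom_smul P1 X h y \<in> mcar (fun_mod P1 X)"
  by (simp add: hom_smul_def fun_mod_def amod_act_closed[OF X])

lemma hom_smul_add_hom:
  "y \<in> mcar X \<Longrightarrow>
    hom_smul P1 X (\<lambda>p. h p + h' p) y = madd (fun_mod P1 X) (hom_smul P1 X h y) (hom_smul P1 X h' y)"
  using amod_add_act[OF X] amod_add_zero_left[OF X amod_zero_closed[OF X]]
  by (auto simp: hom_smul_def fun_mod_def)

lemma hom_smul_mult_emb:
  assumes y: "y \<in> mcar X"
  shows "hom_smul P1 X (\<lambda>p. h p * emb c) y = mact (fun_mod P1 X) (emb c) (hom_smul P1 X h y)"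
proof -
  have "mact X (h p * emb c) y = mact X (emb c) (mact X (h p) y)" for p
    using amod_act_mult[OF X y, of "emb c" "h p"] emb_central by simp
  then show ?thesis by (auto simp: hom_smul_def fun_mod_def amod_act_zero[OF X])
qed

lemma hom_smul_add:
  "y \<in> mcar X \<Longrightarrow> y' \<in> mcar X \<Longrightarrow>
    hom_smul P1 X h (madd X y y') = madd (fun_mod P1 X) (hom_smul P1 X h y) (hom_smul P1 X h y')"
  using amod_act_add[OF X] amod_add_zero_left[OF X amod_zero_closed[OF X]]
  by (auto simp: hom_smul_def fun_mod_def)

lemma hom_smul_act: "y \<in> mcar X \<Longrightarrow> hom_smul P1 X h (mact X a y) = hom_smul P1 X (\<lambda>p. h p * a) y"
  using amod_act_mult[OF X] by (auto simp: hom_smul_def)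

text \<open>One half of the isomorphism \<open>Hom(X, \<nu>P) \<cong> D Hom(P, X)\<close>: a functional on maps \<open>P1 \<rightarrow> X\<close> gives
  \<open>y \<mapsto> (h \<mapsto> lam (h(-) y))\<close>, and it lands in \<open>K_\<nu>f\<close> when \<open>lam\<close> kills the image of \<open>Hom(f, X)\<close>.\<close>

lemma functional_induces_K_nak_hom:
  assumes lam: "klinear emb (fun_mod P1 X) lam"
    and vanish: "\<And>v. ahom P0 X v \<Longrightarrow> lam (precomp_fun P1 X f v) = 0"
  shows "ahom X (K_nak emb P1 P0 f) (\<lambda>y h. if h \<in> homA P1 then lam (hom_smul P1 X h y) else 0)"
    (is "ahom X ?K ?\<psi>")
proof -
  have lam_add: "lam (madd (fun_mod P1 X) w w') = lam w + lam w'"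
    if "w \<in> mcar (fun_mod P1 X)" "w' \<in> mcar (fun_mod P1 X)" for w w'
    using lam that unfolding klinear_def by blast
  have lam_scale: "lam (mact (fun_mod P1 X) (emb c) w) = c * lam w" if "w \<in> mcar (fun_mod P1 X)" for w c
    using lam that unfolding klinear_def by blast
  have in_nak: "?\<psi> y \<in> mcar (nak emb P1)" if y: "y \<in> mcar X" for y
    unfolding nak_def
  proof (simp only: mem_Collect_eq select_convs, intro conjI ballI allI impI)
    fix h h' assume h: "h \<in> homA P1" and h': "h' \<in> homA P1"
    then show "?\<psi> y (\<lambda>p. h p + h' p) = ?\<psi> y h + ?\<psi> y h'"
      using lam_add hom_smul_in_fun_mod[OF y] hom_smul_add_hom[OF y] homA_add_closed[OF h h'] by simp
  next
    fix c h assume h: "h \<in> homA P1"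
    then show "?\<psi> y (\<lambda>p. h p * emb c) = c * ?\<psi> y h"
      using lam_scale hom_smul_in_fun_mod[OF y] hom_smul_mult_emb[OF y] homA_mult_right[OF h] by simp
  qed simp
  have in_K: "nak_map P1 P0 f (?\<psi> y) = (\<lambda>h. 0)" if y: "y \<in> mcar X" for y
  proof
    fix h0
    show "nak_map P1 P0 f (?\<psi> y) h0 = 0"
    proof (cases "h0 \<in> homA P0")
      case True
      have "hom_smul P1 X (\<lambda>p. if p \<in> mcar P1 then h0 (f p) else 0) y =
          precomp_fun P1 X f (\<lambda>q. mact X (h0 q) y)"
        by (auto simp: hom_smul_def precomp_fun_def)
      then show ?thesis
        using vanish[OF ahom_homA_smul[OF X True y]] homA_precomp[OF P1 f True] True
        by (simp add: nak_map_def)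
    qed (simp add: nak_map_def)
  qed
  show ?thesis
    unfolding ahom_def
  proof (intro conjI ballI allI)
    fix y assume "y \<in> mcar X"
    then show "?\<psi> y \<in> mcar ?K" using in_nak in_K K_nak_carrier by blast
  next
    fix y y' assume "y \<in> mcar X" "y' \<in> mcar X"
    then show "?\<psi> (madd X y y') = madd ?K (?\<psi> y) (?\<psi> y')"
      using lam_add hom_smul_in_fun_mod hom_smul_add by (auto simp: K_nak_add)
  next
    fix a y assume y: "y \<in> mcar X"
    show "?\<psi> (mact X a y) = mact ?K a (?\<psi> y)"
    proof
      fix h
      show "?\<psi> (mact X a y) h = mact ?K a (?\<psi> y) h"
        using homA_mult_right[of h P1 a] hom_smul_act[OF y] by (simp add: K_nak_act)
    qed
  qed
qed

lemma hom_smul_coord: "y \<in> mcar X \<Longrightarrow> hom_smul P1 X (coord P1 i j) y p = mact X (coord P1 i j p) y"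
  by (simp add: hom_smul_def coord_def amod_zero_act[OF X])

lemma hom_smul_dual_basis_expand:
  assumes R1: "retract_of_free P1 n i r" and u: "ahom P1 X u"
  shows "(\<lambda>p. if p \<in> mcar P1 then u p else mzero X) =
    lincomb (fun_mod P1 X) (map (\<lambda>j. (emb 1, hom_smul P1 X (coord P1 i j) (u (r (unit_vec j))))) [0..<n])"
    (is "?u' = lincomb ?F (map (\<lambda>j. (emb 1, hom_smul P1 X (coord P1 i j) (?b j))) [0..<n])")
proof
  fix p
  have b: "?b ` set [0..<n] \<subseteq> mcar X"
    using ahom_closed[OF u retract_basis_closed[OF R1]] by auto
  have "?u' p = lincomb X (map (\<lambda>j. (coord P1 i j p, ?b j)) [0..<n])"
  proof (cases "p \<in> mcar P1")
    case True
    then show ?thesis using retract_hom_expand[OF R1 u ahom_zero[OF P1 X u] True] by (simp add: coord_def)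
  next
    case False
    then show ?thesis
      using lincomb_scale_coeffs[OF X b, of 0 "\<lambda>j. 0"] amod_zero_act[OF X lincomb_closed[OF X]] b
      by (simp add: coord_def o_def image_subset_iff)
  qed
  also have "\<dots> = lincomb X (map (\<lambda>j. (1, mact X (coord P1 i j p) (?b j))) [0..<n])"
    by (rule lincomb_one_coeffs[OF X b, symmetric])
  also have "\<dots> = lincomb X (map (\<lambda>j. (1, hom_smul P1 X (coord P1 i j) (?b j) p)) [0..<n])"
    using b by (intro arg_cong[where f = "lincomb X"] map_cong) (auto intro!: hom_smul_coord[symmetric])
  also have "\<dots> = lincomb ?F (map (\<lambda>j. (emb 1, hom_smul P1 X (coord P1 i j) (?b j))) [0..<n]) p"
    by (simp add: lincomb_fun_mod o_def emb_one)
  finally show "?u' p = \<dots>" .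
qed

text \<open>Conversely, if \<open>u : P1 \<rightarrow> X\<close> does not factor through \<open>f\<close>, a functional separating \<open>u\<close> from the
  image of \<open>Hom(f, X)\<close> yields a morphism \<open>X \<rightarrow> K_\<nu>f\<close>; it is nonzero because \<open>u\<close> is a combination
  of the maps \<open>coord j (-) u(b_j)\<close> given by the dual basis.\<close>

lemma precomp_surj_if_K_nak_hom_trivial:
  assumes R1: "retract_of_free P1 n i r"
    and T: "\<forall>g. ahom X (K_nak emb P1 P0 f) g \<longrightarrow> (\<forall>x\<in>mcar X. g x = mzero (K_nak emb P1 P0 f))"
  shows "precomp_surj P1 P0 f X"
  unfolding precomp_surj_def
proof (intro allI impI, rule ccontr)
  fix u assume u: "ahom P1 X u" and no_ext: "\<not> (\<exists>v. ahom P0 X v \<and> (\<forall>p\<in>mcar P1. u p = v (f p)))"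
  let ?F = "fun_mod P1 X" and ?W = "{precomp_fun P1 X f v | v. ahom P0 X v}"
  define u' where "u' = (\<lambda>p. if p \<in> mcar P1 then u p else mzero X)"
  have u'F: "u' \<in> mcar ?F" using ahom_closed[OF u] by (simp add: u'_def fun_mod_def)
  have u'W: "u' \<notin> ?W"
  proof
    assume "u' \<in> ?W"
    then obtain v where "ahom P0 X v" "u' = precomp_fun P1 X f v" by blast
    then have "ahom P0 X v \<and> (\<forall>p\<in>mcar P1. u p = v (f p))"
      by (auto simp: u'_def precomp_fun_def fun_eq_iff split: if_splits)
    then show False using no_ext by blast
  qed
  obtain lam where lam: "klinear emb ?F lam" and lam_W: "\<forall>w\<in>?W. lam w = 0" and lam_u: "lam u' = 1"
    using exists_separating_functional[OF is_amod_fun_mod[OF X] ksubspace_precomp_image u'F u'W] by blast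
  have \<psi>: "ahom X (K_nak emb P1 P0 f) (\<lambda>y h. if h \<in> homA P1 then lam (hom_smul P1 X h y) else 0)"
    by (rule functional_induces_K_nak_hom[OF lam]) (use lam_W in blast)
  have lam_smul: "lam (hom_smul P1 X h y) = 0" if "h \<in> homA P1" "y \<in> mcar X" for h y
  proof -
    have "(\<lambda>h'. if h' \<in> homA P1 then lam (hom_smul P1 X h' y) else 0) = (\<lambda>h. 0)"
      using T[rule_format, OF \<psi> that(2)] by (simp add: K_nak_zero)
    from fun_cong[OF this, of h] show ?thesis using that(1) by simp
  qed
  define t where "t j = hom_smul P1 X (coord P1 i j) (u (r (unit_vec j)))" for j
  have t: "t j \<in> mcar ?F" "lam (t j) = 0" if "j < n" for j
    using ahom_closed[OF u retract_basis_closed[OF R1 that]] hom_smul_in_fun_mod lam_smul homA_coord[OF R1]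
    by (auto simp: t_def)
  have "lam u' = (\<Sum>j\<leftarrow>[0..<n]. 1 * lam (t j))"
    unfolding u'_def hom_smul_dual_basis_expand[OF R1 u, folded t_def]
    by (rule klinear_lincomb[OF is_amod_fun_mod[OF X] lam]) (use t in auto)
  also have "\<dots> = 0"
    unfolding interv_sum_list_conv_sum_set_nat by (rule sum.neutral) (simp add: t)
  finally show False using lam_u by simp
qed

end

end

section \<open>Finite generation of kernels and quotients\<close>

fun kspan :: "('k::field \<Rightarrow> 'a::ring_1) \<Rightarrow> ('a, 'm) amod \<Rightarrow> 'm list \<Rightarrow> 'm set" where
  "kspan emb M [] = {mzero M}"
| "kspan emb M (v # vs) = {madd M (mact M (emb c) v) w | c w. w \<in> kspan emb M vs}"

lemma kspan_lincomb: "x \<in> kspan emb M vs \<Longrightarrow> \<exists>cs. map snd cs = vs \<and> x = lincomb M cs"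
proof (induction vs arbitrary: x)
  case (Cons v vs)
  then obtain c w cs where "x = madd M (mact M (emb c) v) w" "map snd cs = vs" "w = lincomb M cs" by force
  then show ?case by (intro exI[of _ "(emb c, v) # cs"]) simp
qed simp

context scalar_embedding
begin

context
  fixes M :: "('a, 'm) amod"
  assumes M: "is_amod M"
begin

lemma kspan_closed: "set vs \<subseteq> mcar M \<Longrightarrow> kspan emb M vs \<subseteq> mcar M"
  by (induction vs) (auto simp: amod_zero_closed[OF M] amod_add_closed[OF M] amod_act_closed[OF M])

lemma kspan_zero: "set vs \<subseteq> mcar M \<Longrightarrow> mzero M \<in> kspan emb M vs"
proof (induction vs)
  case (Cons v vs)
  then have "mzero M = madd M (mact M (emb 0) v) (mzero M)"
    by (simp add: kscale_zero[OF M] amod_add_zero_left[OF M] amod_zero_closed[OF M])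
  with Cons show ?case by auto
qed simp

lemma kspan_add:
  "set vs \<subseteq> mcar M \<Longrightarrow> x \<in> kspan emb M vs \<Longrightarrow> y \<in> kspan emb M vs \<Longrightarrow> madd M x y \<in> kspan emb M vs"
proof (induction vs arbitrary: x y)
  case Nil
  then show ?case by (simp add: amod_add_zero_left[OF M] amod_zero_closed[OF M])
next
  case (Cons v vs)
  then obtain c w d w' where x: "x = madd M (mact M (emb c) v) w" "w \<in> kspan emb M vs"
    and y: "y = madd M (mact M (emb d) v) w'" "w' \<in> kspan emb M vs" by auto
  have v: "v \<in> mcar M" and vs: "set vs \<subseteq> mcar M" using Cons.prems by auto
  have "w \<in> mcar M" "w' \<in> mcar M" using kspan_closed[OF vs] x y by auto
  then have "madd M x y = madd M (mact M (emb (c + d)) v) (madd M w w')"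
    unfolding x y using v
    by (simp add: kscale_add[OF M] amod_add_swap_middle[OF M] amod_act_closed[OF M])
  with Cons.IH[OF vs x(2) y(2)] show ?case by auto
qed

lemma kspan_scale: "set vs \<subseteq> mcar M \<Longrightarrow> x \<in> kspan emb M vs \<Longrightarrow> mact M (emb c) x \<in> kspan emb M vs"
proof (induction vs arbitrary: x)
  case Nil
  then show ?case by (simp add: amod_act_zero[OF M])
next
  case (Cons v vs)
  then obtain d w where x: "x = madd M (mact M (emb d) v) w" "w \<in> kspan emb M vs" by auto
  have v: "v \<in> mcar M" and vs: "set vs \<subseteq> mcar M" using Cons.prems by auto
  have "w \<in> mcar M" using kspan_closed[OF vs] x by auto
  then have "mact M (emb c) x = madd M (mact M (emb (c * d)) v) (mact M (emb c) w)"
    unfolding x using v by (simp add: kscale_mult[OF M] amod_act_add[OF M] amod_act_closed[OF M])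
  with Cons.IH[OF vs x(2)] show ?case by auto
qed

lemma kspan_base: "set vs \<subseteq> mcar M \<Longrightarrow> u \<in> set vs \<Longrightarrow> u \<in> kspan emb M vs"
proof (induction vs)
  case (Cons v vs)
  have v: "v \<in> mcar M" and vs: "set vs \<subseteq> mcar M" using Cons.prems by auto
  show ?case
  proof (cases "u = v")
    case True
    then have "u = madd M (mact M (emb 1) v) (mzero M)"
      using v by (simp add: kscale_one[OF M] amod_add_zero_right[OF M])
    then show ?thesis using kspan_zero[OF vs] by auto
  next
    case False
    then have u: "u \<in> kspan emb M vs" using Cons by auto
    then have "u = madd M (mact M (emb 0) v) u"
      using v kspan_closed[OF vs] by (auto simp: kscale_zero[OF M] amod_add_zero_left[OF M])
    then show ?thesis using u by auto
  qed
qed simp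

lemma kspan_ksubspace: "set vs \<subseteq> mcar M \<Longrightarrow> ksubspace emb M (kspan emb M vs)"
  unfolding ksubspace_def by (simp add: kspan_closed kspan_zero kspan_add kspan_scale)

lemma kspan_eliminate_leading:
  assumes vs: "set vs \<subseteq> mcar M" and v: "v \<in> mcar M" and c0: "c0 \<noteq> 0"
    and w0: "w0 \<in> kspan emb M vs" and w: "w \<in> kspan emb M vs"
  shows "madd M (madd M (mact M (emb d) v) w) (mact M (emb (- (d / c0))) (madd M (mact M (emb c0) v) w0))
    \<in> kspan emb M vs"
proof -
  have wM: "w \<in> mcar M" and w0M: "w0 \<in> mcar M" using kspan_closed[OF vs] w w0 by auto
  have "mact M (emb (- (d / c0))) (madd M (mact M (emb c0) v) w0) =
      madd M (mact M (emb (- d)) v) (mact M (emb (- (d / c0))) w0)"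
    using v w0M c0 by (simp add: amod_act_add[OF M] kscale_mult[OF M, symmetric] amod_act_closed[OF M])
  then have "madd M (madd M (mact M (emb d) v) w) (mact M (emb (- (d / c0))) (madd M (mact M (emb c0) v) w0)) =
      madd M (madd M (mact M (emb d) v) (mact M (emb (- d)) v)) (madd M w (mact M (emb (- (d / c0))) w0))"
    using amod_add_swap_middle[OF M amod_act_closed[OF M v] wM amod_act_closed[OF M v]
        amod_act_closed[OF M w0M]]
    by simp
  also have "\<dots> = madd M w (mact M (emb (- (d / c0))) w0)"
    using v wM w0M
    by (simp add: kscale_add[OF M, symmetric] kscale_zero[OF M] amod_add_zero_left[OF M]
        amod_add_closed[OF M] amod_act_closed[OF M])
  finally show ?thesis using kspan_add[OF vs w kspan_scale[OF vs w0]] by simp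
qed

text \<open>Induction on the spanning list: if \<open>L\<close> is not contained in the span of the tail, one vector
  \<open>l0 \<in> L\<close> with nonzero leading coefficient reduces every \<open>l \<in> L\<close> into \<open>L \<inter> kspan emb M vs\<close>.\<close>

lemma ksubspace_finitely_spanned:
  "set vs \<subseteq> mcar M \<Longrightarrow> ksubspace emb M L \<Longrightarrow> L \<subseteq> kspan emb M vs \<Longrightarrow>
    \<exists>ls. set ls \<subseteq> L \<and> L \<subseteq> kspan emb M ls"
proof (induction vs arbitrary: L)
  case Nil
  then show ?case by (intro exI[of _ "[]"]) auto
next
  case (Cons v vs)
  have v: "v \<in> mcar M" and vs: "set vs \<subseteq> mcar M" using Cons.prems by auto
  have LM: "L \<subseteq> mcar M" and addL: "\<And>x y. x \<in> L \<Longrightarrow> y \<in> L \<Longrightarrow> madd M x y \<in> L"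
    and scL: "\<And>c x. x \<in> L \<Longrightarrow> mact M (emb c) x \<in> L"
    using Cons.prems(2) by (auto simp: ksubspace_def)
  have "ksubspace emb M (L \<inter> kspan emb M vs)"
    using Cons.prems(2) kspan_ksubspace[OF vs] unfolding ksubspace_def by blast
  then obtain ls' where ls': "set ls' \<subseteq> L \<inter> kspan emb M vs" "L \<inter> kspan emb M vs \<subseteq> kspan emb M ls'"
    using Cons.IH[OF vs] by blast
  show ?case
  proof (cases "L \<subseteq> kspan emb M vs")
    case True
    then have "L \<inter> kspan emb M vs = L" by blast
    with ls' show ?thesis by (intro exI[of _ ls']) simp
  next
    case False
    then obtain l0 where l0: "l0 \<in> L" "l0 \<notin> kspan emb M vs" by blast
    then obtain c0 w0 where l0e: "l0 = madd M (mact M (emb c0) v) w0" "w0 \<in> kspan emb M vs"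
      using Cons.prems(3) by auto
    have w0M: "w0 \<in> mcar M" using kspan_closed[OF vs] l0e by auto
    have l0M: "l0 \<in> mcar M" using LM l0 by blast
    have c0: "c0 \<noteq> 0"
    proof
      assume "c0 = 0"
      then have "l0 = w0" using l0e v w0M by (simp add: kscale_zero[OF M] amod_add_zero_left[OF M])
      then show False using l0 l0e by simp
    qed
    have "l \<in> kspan emb M (l0 # ls')" if l: "l \<in> L" for l
    proof -
      obtain d w where le: "l = madd M (mact M (emb d) v) w" "w \<in> kspan emb M vs"
        using Cons.prems(3) l by auto
      have lM: "l \<in> mcar M" using LM l by blast
      define e where "e = d / c0"
      define t where "t = madd M l (mact M (emb (- e)) l0)"
      have "t \<in> kspan emb M vs"
        unfolding t_def e_def le(1) l0e(1) by (rule kspan_eliminate_leading[OF vs v c0 l0e(2) le(2)])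
      moreover have "t \<in> L" unfolding t_def using addL[OF l scL[OF l0(1)]] .
      ultimately have "t \<in> kspan emb M ls'" using ls' by blast
      moreover have "madd M (mact M (emb e) l0) t = l"
        unfolding t_def using l0M lM
        by (simp add: amod_add_left_commute[OF M] amod_act_closed[OF M] kscale_add[OF M, symmetric]
            kscale_zero[OF M] amod_add_zero_right[OF M])
      ultimately show ?thesis by force
    qed
    moreover have "set (l0 # ls') \<subseteq> L" using l0 ls' by auto
    ultimately show ?thesis by blast
  qed
qed

end

text \<open>The spanning list consists of the products of a spanning set of \<open>A\<close> over k with the generators.\<close>

lemma in_modA_finitely_kspanned:
  fixes X :: "('a, 'x) amod"
  assumes B: "finite B" "\<forall>a. \<exists>c. a = (\<Sum>b\<in>B. emb (c b) * b)" and XM: "in_modA X"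
  shows "\<exists>vs. set vs \<subseteq> mcar X \<and> mcar X \<subseteq> kspan emb X vs"
proof -
  have X: "is_amod X" using XM by (simp add: in_modA_def)
  obtain gs where gs: "set gs \<subseteq> mcar X" "\<forall>x\<in>mcar X. \<exists>cs. map snd cs = gs \<and> x = lincomb X cs"
    using XM unfolding in_modA_def by meson
  obtain bl where bl: "set bl = B" using finite_list[OF B(1)] by blast
  define vs where "vs = concat (map (\<lambda>g. map (\<lambda>b. mact X b g) bl) gs)"
  have vs: "set vs \<subseteq> mcar X" unfolding vs_def using gs(1) amod_act_closed[OF X] by auto
  have act_in_span: "mact X (\<Sum>b\<in>B'. emb (c b) * b) u \<in> kspan emb X vs"
    if "finite B'" "B' \<subseteq> B" "u \<in> set gs" for B' c u
    using that
  proof (induction B' rule: finite_induct)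
    case empty
    then show ?case using amod_zero_act[OF X] gs(1) kspan_zero[OF X vs] by auto
  next
    case (insert b B')
    have uX: "u \<in> mcar X" using insert gs(1) by auto
    have "mact X b u \<in> set vs" unfolding vs_def using insert bl by auto
    then have "mact X (emb (c b)) (mact X b u) \<in> kspan emb X vs"
      by (intro kspan_scale[OF X vs] kspan_base[OF X vs])
    moreover have "mact X (\<Sum>b\<in>insert b B'. emb (c b) * b) u
        = madd X (mact X (emb (c b)) (mact X b u)) (mact X (\<Sum>b\<in>B'. emb (c b) * b) u)"
      using insert uX by (simp add: amod_add_act[OF X] amod_act_mult[OF X])
    ultimately show ?case using kspan_add[OF X vs] insert by simp
  qed
  have "lincomb X cs \<in> kspan emb X vs" if "set (map snd cs) \<subseteq> set gs" for cs
    using that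
  proof (induction cs)
    case Nil
    then show ?case using kspan_zero[OF X vs] by simp
  next
    case (Cons p cs)
    obtain a u where p: "p = (a, u)" by (cases p)
    obtain c where "a = (\<Sum>b\<in>B. emb (c b) * b)" using B(2) by blast
    then have "mact X a u \<in> kspan emb X vs" using act_in_span[OF B(1) subset_refl, of u c] Cons.prems p by auto
    then show ?case using Cons kspan_add[OF X vs] p by auto
  qed
  then have "mcar X \<subseteq> kspan emb X vs" using gs(2) by fastforce
  with vs show ?thesis by blast
qed

lemma ker_mod_in_modA:
  fixes X :: "('a, 'x) amod" and Y :: "('a, 'y) amod"
  assumes B: "finite B" "\<forall>a. \<exists>c. a = (\<Sum>b\<in>B. emb (c b) * b)"
    and XM: "in_modA X" and Y: "is_amod Y" and g: "ahom X Y g"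
  shows "in_modA (ker_mod X Y g)"
proof -
  have X: "is_amod X" using XM by (simp add: in_modA_def)
  obtain vs where vs: "set vs \<subseteq> mcar X" "mcar X \<subseteq> kspan emb X vs"
    using in_modA_finitely_kspanned[OF B XM] by blast
  have "ksubspace emb X (mcar (ker_mod X Y g))"
    unfolding ksubspace_def ker_mod_carrier
    by (auto simp: ahom_zero[OF X Y g] amod_zero_closed amod_add_closed amod_act_closed X Y
        ahom_add[OF g] ahom_act[OF g] amod_add_zero_left amod_act_zero)
  moreover have "mcar (ker_mod X Y g) \<subseteq> kspan emb X vs" using vs(2) by (auto simp: ker_mod_carrier)
  ultimately have "\<exists>ls. set ls \<subseteq> mcar (ker_mod X Y g) \<and> mcar (ker_mod X Y g) \<subseteq> kspan emb X ls"
    by (rule ksubspace_finitely_spanned[OF X vs(1)])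
  then obtain ls where ls: "set ls \<subseteq> mcar (ker_mod X Y g)" "mcar (ker_mod X Y g) \<subseteq> kspan emb X ls"
    by blast
  show ?thesis
    unfolding in_modA_def
  proof (intro conjI is_amod_ker_mod[OF X Y g] exI[of _ ls] ballI)
    show "set ls \<subseteq> mcar (ker_mod X Y g)" using ls(1) .
    fix x assume "x \<in> mcar (ker_mod X Y g)"
    then have "x \<in> kspan emb X ls" using ls(2) by blast
    from kspan_lincomb[OF this] obtain cs where "map snd cs = ls" "x = lincomb X cs" by blast
    then show "\<exists>cs. map snd cs = ls \<and> x = lincomb (ker_mod X Y g) cs"
      by (auto simp: ker_mod_def lincomb_restrict_carrier)
  qed
qed

end

lemma quotient_in_modA:
  assumes YM: "in_modA Y" and Z: "is_amod Z" and p: "ahom Y Z p" and sur: "p ` mcar Y = mcar Z"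
  shows "in_modA Z"
proof -
  have Y: "is_amod Y" using YM by (simp add: in_modA_def)
  obtain gs where gs: "set gs \<subseteq> mcar Y" "\<forall>y\<in>mcar Y. \<exists>cs. map snd cs = gs \<and> y = lincomb Y cs"
    using YM unfolding in_modA_def by meson
  have "\<exists>cs. map snd cs = map p gs \<and> z = lincomb Z cs" if z: "z \<in> mcar Z" for z
  proof -
    obtain y where y: "y \<in> mcar Y" "z = p y" using sur z by blast
    then obtain cs where cs: "map snd cs = gs" "y = lincomb Y cs" using gs(2) by blast
    have "snd ` set cs \<subseteq> mcar Y" using cs(1) gs(1) by (metis set_map)
    then have "z = lincomb Z (map (\<lambda>(a, x). (a, p x)) cs)"
      using y(2) cs(2) lincomb_hom[OF Y p ahom_zero[OF Y Z p]] by simp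
    moreover have "map snd (map (\<lambda>(a, x). (a, p x)) cs) = map p gs"
      unfolding cs(1)[symmetric] by (induction cs) auto
    ultimately show ?thesis by blast
  qed
  then show ?thesis
    unfolding in_modA_def using Z gs(1) ahom_closed[OF p] by (intro conjI exI[of _ "map p gs"] ballI) auto
qed

section \<open>Closure properties of W_f\<close>

lemma Wf_iff_precomp_bij:
  assumes fd: "fd_algebra emb" and P1: "in_projA P1" and P0: "in_projA P0" and f: "ahom P1 P0 f"
  shows "Wf emb P1 P0 f X \<longleftrightarrow> in_modA X \<and> precomp_inj P1 P0 f X \<and> precomp_surj P1 P0 f X"
proof -
  interpret central_scalar_embedding emb using fd_algebra_central_scalar_embedding[OF fd] .
  obtain n i r where R1: "retract_of_free P1 n i r" using in_projA_retract_of_free[OF P1] by blast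
  obtain m i' r' where R0: "retract_of_free P0 m i' r'" using in_projA_retract_of_free[OF P0] by blast
  have P1': "is_amod P1" and P0': "is_amod P0" using P1 P0 by (simp_all add: in_projA_is_amod)
  show ?thesis
  proof
    assume W: "Wf emb P1 P0 f X"
    then have X: "is_amod X" by (simp add: Wf_def Fbar_def in_modA_def)
    show "in_modA X \<and> precomp_inj P1 P0 f X \<and> precomp_surj P1 P0 f X"
      using W precomp_inj_if_Fbar[OF P1' P0' f X] precomp_surj_if_K_nak_hom_trivial[OF P1' P0' f X R1]
      by (simp add: Wf_def Tbar_def)
  next
    assume H: "in_modA X \<and> precomp_inj P1 P0 f X \<and> precomp_surj P1 P0 f X"
    then have X: "is_amod X" by (simp add: in_modA_def)
    have "Tbar emb P1 P0 f X"
      using H K_nak_hom_trivial_if_precomp_surj[OF R1 R0 f X] by (auto simp: Tbar_def K_nak_zero)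
    moreover have "Fbar P1 P0 f X" using H Fbar_if_precomp_inj[OF P1' P0' f X] by blast
    ultimately show "Wf emb P1 P0 f X" by (simp add: Wf_def)
  qed
qed

lemma precomp_inj_ker_mod:
  assumes "precomp_inj P1 P0 f X"
  shows "precomp_inj P1 P0 f (ker_mod X Y g)"
  using assms by (simp add: precomp_inj_def ahom_into_ker_mod_iff) (simp add: ker_mod_def)

lemma precomp_surj_ker_mod:
  assumes g: "ahom X Y g" and sX: "precomp_surj P1 P0 f X" and iY: "precomp_inj P1 P0 f Y"
  shows "precomp_surj P1 P0 f (ker_mod X Y g)"
  unfolding precomp_surj_def
proof (intro allI impI)
  fix u assume "ahom P1 (ker_mod X Y g) u"
  then have u: "ahom P1 X u" and gu: "\<forall>p\<in>mcar P1. g (u p) = mzero Y"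
    by (auto simp: ahom_into_ker_mod_iff)
  obtain v where v: "ahom P0 X v" and uv: "\<forall>p\<in>mcar P1. u p = v (f p)"
    using sX u by (auto simp: precomp_surj_def)
  have "\<forall>p\<in>mcar P1. g (v (f p)) = mzero Y" using uv gu by simp
  then have "\<forall>x\<in>mcar P0. g (v x) = mzero Y"
    using iY ahom_comp[OF v g] unfolding precomp_inj_def by blast
  with v uv show "\<exists>v. ahom P0 (ker_mod X Y g) v \<and> (\<forall>p\<in>mcar P1. u p = v (f p))"
    by (auto simp: ahom_into_ker_mod_iff)
qed

context
  fixes P1 :: "('a::ring_1, 'p1) amod" and P0 :: "('a, 'p0) amod" and f :: "'p1 \<Rightarrow> 'p0"
  assumes P1: "in_projA P1" and P0: "in_projA P0" and f: "ahom P1 P0 f"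
begin

lemma precomp_inj_quotient:
  assumes X: "is_amod X" and Y: "is_amod Y" and Z: "is_amod Z"
    and g: "ahom X Y g" and p: "ahom Y Z p" and p_surj: "p ` mcar Y = mcar Z"
    and exact: "{y \<in> mcar Y. p y = mzero Z} = g ` mcar X"
    and sX: "precomp_surj P1 P0 f X" and iY: "precomp_inj P1 P0 f Y"
  shows "precomp_inj P1 P0 f Z"
  unfolding precomp_inj_def
proof (intro allI impI ballI)
  fix w x assume "ahom P0 Z w \<and> (\<forall>q\<in>mcar P1. w (f q) = mzero Z)" and x: "x \<in> mcar P0"
  then have w: "ahom P0 Z w" and wf: "\<forall>q\<in>mcar P1. w (f q) = mzero Z" by auto
  obtain v where v: "ahom P0 Y v" and pv: "\<forall>x\<in>mcar P0. p (v x) = w x"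
    using projA_lift[OF P0 Y Z p w] ahom_closed[OF w] p_surj by blast
  have "\<forall>q\<in>mcar P1. v (f q) \<in> g ` mcar X"
    using exact ahom_closed[OF v] ahom_closed[OF f] pv wf by auto
  then obtain u where u: "ahom P1 X u" and gu: "\<forall>q\<in>mcar P1. g (u q) = v (f q)"
    using projA_lift[OF P1 X Y g ahom_comp[OF f v]] by blast
  obtain v' where v': "ahom P0 X v'" and uv': "\<forall>q\<in>mcar P1. u q = v' (f q)"
    using sX u by (auto simp: precomp_surj_def)
  have gv': "ahom P0 Y (\<lambda>x. g (v' x))" by (rule ahom_comp[OF v' g])
  have "\<forall>q\<in>mcar P1. madd Y (v (f q)) (mact Y (-1) (g (v' (f q)))) = mzero Y"
    using uv' gu amod_add_neg[OF Y] ahom_closed[OF ahom_comp[OF f v]] by simp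
  then have "\<forall>x\<in>mcar P0. madd Y (v x) (mact Y (-1) (g (v' x))) = mzero Y"
    using iY ahom_pointwise_diff[OF Y v gv'] unfolding precomp_inj_def by blast
  then have "v x = g (v' x)"
    using amod_eq_if_diff_zero[OF Y ahom_closed[OF gv' x] ahom_closed[OF v x]] x by simp
  then have "p (v x) = mzero Z" using exact ahom_closed[OF v' x] by blast
  then show "w x = mzero Z" using pv x by simp
qed

lemma precomp_surj_quotient:
  assumes Y: "is_amod Y" and Z: "is_amod Z" and p: "ahom Y Z p" and p_surj: "p ` mcar Y = mcar Z"
    and sY: "precomp_surj P1 P0 f Y"
  shows "precomp_surj P1 P0 f Z"
  unfolding precomp_surj_def
proof (intro allI impI)
  fix u assume u: "ahom P1 Z u"
  obtain u' where u': "ahom P1 Y u'" and pu: "\<forall>q\<in>mcar P1. p (u' q) = u q"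
    using projA_lift[OF P1 Y Z p u] ahom_closed[OF u] p_surj by blast
  obtain v where v: "ahom P0 Y v" and uv: "\<forall>q\<in>mcar P1. u' q = v (f q)"
    using sY u' by (auto simp: precomp_surj_def)
  have "\<forall>q\<in>mcar P1. u q = p (v (f q))" using pu uv by simp
  with ahom_comp[OF v p] show "\<exists>v. ahom P0 Z v \<and> (\<forall>q\<in>mcar P1. u q = v (f q))" by blast
qed

lemma precomp_inj_extension:
  assumes X: "is_amod X" and Y: "is_amod Y" and Z: "is_amod Z"
    and i: "ahom X Y i" and inj: "inj_on i (mcar X)" and p: "ahom Y Z p"
    and exact: "{y \<in> mcar Y. p y = mzero Z} = i ` mcar X"
    and iX: "precomp_inj P1 P0 f X" and iZ: "precomp_inj P1 P0 f Z"
  shows "precomp_inj P1 P0 f Y"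
  unfolding precomp_inj_def
proof (intro allI impI)
  fix v assume "ahom P0 Y v \<and> (\<forall>q\<in>mcar P1. v (f q) = mzero Y)"
  then have v: "ahom P0 Y v" and vf: "\<forall>q\<in>mcar P1. v (f q) = mzero Y" by auto
  have "\<forall>q\<in>mcar P1. p (v (f q)) = mzero Z" using vf ahom_zero[OF Y Z p] by simp
  then have "\<forall>x\<in>mcar P0. p (v x) = mzero Z" using iZ ahom_comp[OF v p] unfolding precomp_inj_def by blast
  then have "\<forall>x\<in>mcar P0. v x \<in> i ` mcar X" using exact ahom_closed[OF v] by blast
  then obtain v' where v': "ahom P0 X v'" and iv': "\<forall>x\<in>mcar P0. i (v' x) = v x"
    using ahom_factor_through_inj[OF X i inj in_projA_is_amod[OF P0] v] by blast
  have "\<forall>q\<in>mcar P1. v' (f q) = mzero X"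
  proof
    fix q assume q: "q \<in> mcar P1"
    have "i (v' (f q)) = i (mzero X)" using iv' vf q ahom_closed[OF f q] ahom_zero[OF X Y i] by simp
    then show "v' (f q) = mzero X"
      using inj ahom_closed[OF v' ahom_closed[OF f q]] amod_zero_closed[OF X] by (simp add: inj_on_eq_iff)
  qed
  then have "\<forall>x\<in>mcar P0. v' x = mzero X" using iX v' unfolding precomp_inj_def by blast
  then show "\<forall>x\<in>mcar P0. v x = mzero Y" using iv' ahom_zero[OF X Y i] by metis
qed

lemma precomp_surj_extension:
  assumes X: "is_amod X" and Y: "is_amod Y" and Z: "is_amod Z"
    and i: "ahom X Y i" and inj: "inj_on i (mcar X)" and p: "ahom Y Z p" and p_surj: "p ` mcar Y = mcar Z"
    and exact: "{y \<in> mcar Y. p y = mzero Z} = i ` mcar X"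
    and sX: "precomp_surj P1 P0 f X" and sZ: "precomp_surj P1 P0 f Z"
  shows "precomp_surj P1 P0 f Y"
  unfolding precomp_surj_def
proof (intro allI impI)
  fix u assume u: "ahom P1 Y u"
  obtain w where w: "ahom P0 Z w" and pw: "\<forall>q\<in>mcar P1. p (u q) = w (f q)"
    using sZ ahom_comp[OF u p] unfolding precomp_surj_def by blast
  obtain w' where w': "ahom P0 Y w'" and pw': "\<forall>x\<in>mcar P0. p (w' x) = w x"
    using projA_lift[OF P0 Y Z p w] ahom_closed[OF w] p_surj by blast
  have w'f: "ahom P1 Y (\<lambda>q. w' (f q))" by (rule ahom_comp[OF f w'])
  define d where "d q = madd Y (u q) (mact Y (-1) (w' (f q)))" for q
  have d: "ahom P1 Y d" unfolding d_def by (rule ahom_pointwise_diff[OF Y u w'f])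
  have "d q \<in> i ` mcar X" if q: "q \<in> mcar P1" for q
  proof -
    have "p (d q) = madd Z (w (f q)) (mact Z (-1) (w (f q)))"
      using ahom_add[OF p ahom_closed[OF u q] amod_act_closed[OF Y ahom_closed[OF w'f q]]]
        ahom_act[OF p ahom_closed[OF w'f q]] pw pw' q ahom_closed[OF f q]
      by (simp add: d_def)
    also have "\<dots> = mzero Z" using amod_add_neg[OF Z ahom_closed[OF w ahom_closed[OF f q]]] .
    finally show ?thesis using exact ahom_closed[OF d q] by blast
  qed
  then obtain d' where d': "ahom P1 X d'" and id': "\<forall>q\<in>mcar P1. i (d' q) = d q"
    using ahom_factor_through_inj[OF X i inj in_projA_is_amod[OF P1] d] by blast
  obtain v where v: "ahom P0 X v" and dv: "\<forall>q\<in>mcar P1. d' q = v (f q)"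
    using sX d' unfolding precomp_surj_def by blast
  have "u q = madd Y (w' (f q)) (i (v (f q)))" if q: "q \<in> mcar P1" for q
  proof -
    have a: "w' (f q) \<in> mcar Y" and b: "u q \<in> mcar Y" using ahom_closed[OF w'f q] ahom_closed[OF u q] by auto
    have "madd Y (w' (f q)) (i (v (f q))) = madd Y (w' (f q)) (madd Y (u q) (mact Y (-1) (w' (f q))))"
      using dv id' q by (simp add: d_def)
    also have "\<dots> = madd Y (u q) (madd Y (w' (f q)) (mact Y (-1) (w' (f q))))"
      using amod_add_left_commute[OF Y a b amod_act_closed[OF Y a]] .
    also have "\<dots> = u q" using amod_add_neg[OF Y a] amod_add_zero_right[OF Y b] by simp
    finally show ?thesis by simp
  qed
  with ahom_pointwise_add[OF Y w' ahom_comp[OF v i]]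
  show "\<exists>v. ahom P0 Y v \<and> (\<forall>q\<in>mcar P1. u q = v (f q))" by blast
qed

end

context
  fixes emb :: "'k::field \<Rightarrow> 'a::ring_1"
    and P1 :: "('a, 'p1) amod" and P0 :: "('a, 'p0) amod" and f :: "'p1 \<Rightarrow> 'p0"
  assumes fd: "fd_algebra emb" and P1: "in_projA P1" and P0: "in_projA P0" and f: "ahom P1 P0 f"
begin

lemma Wf_ker_mod:
  assumes X: "Wf emb P1 P0 f X" and Y: "Wf emb P1 P0 f Y" and g: "ahom X Y g"
  shows "Wf emb P1 P0 f (ker_mod X Y g)"
proof -
  interpret central_scalar_embedding emb by (rule fd_algebra_central_scalar_embedding[OF fd])
  obtain B where B: "finite B" "\<forall>a. \<exists>c. a = (\<Sum>b\<in>B. emb (c b) * b)"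
    using fd unfolding fd_algebra_def by blast
  note W = Wf_iff_precomp_bij[OF fd P1 P0 f]
  have XM: "in_modA X" and iX: "precomp_inj P1 P0 f X" and sX: "precomp_surj P1 P0 f X"
    using X by (simp_all add: W)
  have Y': "is_amod Y" and iY: "precomp_inj P1 P0 f Y" using Y by (simp_all add: W in_modA_def)
  have "in_modA (ker_mod X Y g)" by (rule ker_mod_in_modA[OF B XM Y' g])
  moreover have "precomp_inj P1 P0 f (ker_mod X Y g)" by (rule precomp_inj_ker_mod[OF iX])
  moreover have "precomp_surj P1 P0 f (ker_mod X Y g)" by (rule precomp_surj_ker_mod[OF g sX iY])
  ultimately show ?thesis by (simp add: W)
qed

lemma Wf_quotient:
  assumes X: "Wf emb P1 P0 f X" and Y: "Wf emb P1 P0 f Y" and Z: "is_amod Z"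
    and g: "ahom X Y g" and p: "ahom Y Z p" and p_surj: "p ` mcar Y = mcar Z"
    and exact: "{y \<in> mcar Y. p y = mzero Z} = g ` mcar X"
  shows "Wf emb P1 P0 f Z"
proof -
  note W = Wf_iff_precomp_bij[OF fd P1 P0 f]
  have X': "is_amod X" and sX: "precomp_surj P1 P0 f X" using X by (simp_all add: W in_modA_def)
  have YM: "in_modA Y" and Y': "is_amod Y" and iY: "precomp_inj P1 P0 f Y" and sY: "precomp_surj P1 P0 f Y"
    using Y by (simp_all add: W in_modA_def)
  have "in_modA Z" by (rule quotient_in_modA[OF YM Z p p_surj])
  moreover have "precomp_inj P1 P0 f Z"
    by (rule precomp_inj_quotient[OF P1 P0 f X' Y' Z g p p_surj exact sX iY])
  moreover have "precomp_surj P1 P0 f Z" by (rule precomp_surj_quotient[OF P1 P0 f Y' Z p p_surj sY])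
  ultimately show ?thesis by (simp add: W)
qed

lemma Wf_extension:
  assumes X: "Wf emb P1 P0 f X" and Z: "Wf emb P1 P0 f Z" and YM: "in_modA Y"
    and i: "ahom X Y i" and inj: "inj_on i (mcar X)"
    and p: "ahom Y Z p" and p_surj: "p ` mcar Y = mcar Z"
    and exact: "{y \<in> mcar Y. p y = mzero Z} = i ` mcar X"
  shows "Wf emb P1 P0 f Y"
proof -
  note W = Wf_iff_precomp_bij[OF fd P1 P0 f]
  have X': "is_amod X" and iX: "precomp_inj P1 P0 f X" and sX: "precomp_surj P1 P0 f X"
    using X by (simp_all add: W in_modA_def)
  have Z': "is_amod Z" and iZ: "precomp_inj P1 P0 f Z" and sZ: "precomp_surj P1 P0 f Z"
    using Z by (simp_all add: W in_modA_def)
  have Y': "is_amod Y" using YM by (simp add: in_modA_def)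
  have "precomp_inj P1 P0 f Y" by (rule precomp_inj_extension[OF P1 P0 f X' Y' Z' i inj p exact iX iZ])
  moreover have "precomp_surj P1 P0 f Y"
    by (rule precomp_surj_extension[OF P1 P0 f X' Y' Z' i inj p p_surj exact sX sZ])
  ultimately show ?thesis using YM by (simp add: W)
qed

end

theorem proposition3p7:
  fixes emb :: "'k::field \<Rightarrow> 'a::ring_1"
    and P1 :: "('a, 'p1) amod" and P0 :: "('a, 'p0) amod" and f :: "'p1 \<Rightarrow> 'p0"
  assumes "alg_closed TYPE('k)"
    and "fd_algebra emb"
    and "in_projA P1" and "in_projA P0" and "ahom P1 P0 f"
  shows "(\<forall>(X::('a, 'x) amod) (Y::('a, 'y) amod) g.
            Wf emb P1 P0 f X \<and> Wf emb P1 P0 f Y \<and> ahom X Y g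
            \<longrightarrow> Wf emb P1 P0 f (ker_mod X Y g))
       \<and> (\<forall>(X::('a, 'x) amod) (Y::('a, 'y) amod) (Z::('a, 'z) amod) g p.
            Wf emb P1 P0 f X \<and> Wf emb P1 P0 f Y \<and> ahom X Y g \<and>
            is_amod Z \<and> ahom Y Z p \<and> p ` mcar Y = mcar Z \<and>
            {y \<in> mcar Y. p y = mzero Z} = g ` mcar X
            \<longrightarrow> Wf emb P1 P0 f Z)
       \<and> (\<forall>(X::('a, 'x) amod) (Y::('a, 'y) amod) (Z::('a, 'z) amod) i p.
            Wf emb P1 P0 f X \<and> Wf emb P1 P0 f Z \<and> in_modA Y \<and>
            ahom X Y i \<and> inj_on i (mcar X) \<and>
            ahom Y Z p \<and> p ` mcar Y = mcar Z \<and>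
            {y \<in> mcar Y. p y = mzero Z} = i ` mcar X
            \<longrightarrow> Wf emb P1 P0 f Y)"
  by (intro conjI allI impI; elim conjE)
     (rule Wf_ker_mod[OF assms(2-5)] Wf_quotient[OF assms(2-5)] Wf_extension[OF assms(2-5)]; assumption)+

end
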